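(* There is a universal constant $C>0$ such that for every unit-weight graph $G$ on $n$ vertices there exists a binary signaling scheme that is persuasive and has cost at most $C\sqrt{n}\cdot\mathsf{OPT}$. Moreover, the $O(\sqrt{n})$ approximation ratio is tight for certain graphs: there is a universal constant $c>0$ and a family of unit-weight graphs with arbitrarily large number $n$ of vertices on which $\mathsf{OPT}=O(1)$ and every persuasive signaling scheme (with any finite signal space) has cost at least $c\sqrt{n}$.
   Context: Setting. $V$ is a finite set of $n$ task types and $W=(W_{u,v})_{u,v\in V}$ is a symmetric matrix with entries in $[0,1]$ and $W_{v,v}=1$ for all $v$. It is represented by the weighted graph $G=(V,E,w)$ with $E=\{\{u,v\}:u\neq v,\ W_{u,v}>0\}$ and $w(\{u,v\})=W_{u,v}$; $G$ is a unit-weight graph if all entries of $W$ lie in $\{0,1\}$. For $\theta\in\mathbb{R}_{\ge0}^V$ let $u_v(\theta)=\sum_{v'\in V}W_{v,v'}\theta_{v'}$. A vector $\theta\in\mathbb{R}_{\ge0}^V$ is feasible if $W\theta\ge\mathbf 1$ coordinatewise. $\mathsf{OPT}=\min\{\|\theta\|_1:\theta\ge 0 \text{ feasible}\}$. Signaling. There are $n$ agents; the type profile $t=(t_1,\dots,t_n)$ is a uniformly random bijection $[n]\to V$. A signaling scheme with finite signal space $\Sigma\subset[0,1]$ is a map $\varphi$ assigning to each bijection $t$ a distribution $\varphi(t)$ on $\Sigma^V$; given $t$, a vector $s=(s_v)_{v\in V}\sim\varphi(t)$ is drawn and agent $i$ privately receives $s_{t_i}$. For agent $i$, a signal $\theta\in\Sigma$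 with $\Pr[s_{t_i}=\theta]>0$ and $x\ge0$, let $Q_i(x\mid\theta)=\mathbb{E}\big[x+\sum_{v'\neq t_i}W_{t_i,v'}s_{v'}\,\big|\,s_{t_i}=\theta\big]$ (expectation over the joint law of $t$ and $s$). The scheme is persuasive if for every agent $i$ and every such $\theta$: $Q_i(\theta\mid\theta)\ge1$ and $\theta=\min\{x\ge0:Q_i(x\mid\theta)\ge1\}$. Its cost is $\mathbb{E}[\|s\|_1]$. A binary signaling scheme is one with $|\Sigma|=2$. *)

theory Defs
  imports "HOL-Probability.Probability" "HOL-Combinatorics.Permutations"
begin

text \<open>Vertex set (task types) V = {..<n}; agents = {..<n}.
  Type profiles are bijections {..<n} -> {..<n}, represented as permutations.
  A signal vector s in Sigma^V is a function nat => real (only values on {..<n} matter).\<close>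

definition unit_weight_graph :: "nat \<Rightarrow> (nat \<Rightarrow> nat \<Rightarrow> real) \<Rightarrow> bool" where
  "unit_weight_graph n W \<longleftrightarrow>
     (\<forall>u<n. \<forall>v<n. W u v \<in> {0, 1} \<and> W u v = W v u) \<and> (\<forall>v<n. W v v = 1)"

definition feasible :: "nat \<Rightarrow> (nat \<Rightarrow> nat \<Rightarrow> real) \<Rightarrow> (nat \<Rightarrow> real) \<Rightarrow> bool" where
  "feasible n W \<theta> \<longleftrightarrow> (\<forall>v<n. 0 \<le> \<theta> v) \<and> (\<forall>v<n. (\<Sum>v'<n. W v v' * \<theta> v') \<ge> 1)"

definition OPT :: "nat \<Rightarrow> (nat \<Rightarrow> nat \<Rightarrow> real) \<Rightarrow> real" where
  "OPT n W = Inf {(\<Sum>v<n. \<theta> v) | \<theta>. feasible n W \<theta>}"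

definition type_profiles :: "nat \<Rightarrow> (nat \<Rightarrow> nat) set" where
  "type_profiles n = {t. t permutes {..<n}}"

definition joint :: "nat \<Rightarrow> ((nat \<Rightarrow> nat) \<Rightarrow> (nat \<Rightarrow> real) pmf) \<Rightarrow> ((nat \<Rightarrow> nat) \<times> (nat \<Rightarrow> real)) pmf" where
  "joint n \<phi> = bind_pmf (pmf_of_set (type_profiles n)) (\<lambda>t. map_pmf (\<lambda>s. (t, s)) (\<phi> t))"

definition is_scheme :: "nat \<Rightarrow> real set \<Rightarrow> ((nat \<Rightarrow> nat) \<Rightarrow> (nat \<Rightarrow> real) pmf) \<Rightarrow> bool" where
  "is_scheme n \<Sigma> \<phi> \<longleftrightarrow> finite \<Sigma> \<and> \<Sigma> \<subseteq> {0..1} \<and>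
     (\<forall>t\<in>type_profiles n. \<forall>s\<in>set_pmf (\<phi> t). \<forall>v<n. s v \<in> \<Sigma>)"

definition cond_exp :: "'a pmf \<Rightarrow> 'a set \<Rightarrow> ('a \<Rightarrow> real) \<Rightarrow> real" where
  "cond_exp D A X = measure_pmf.expectation D (\<lambda>\<omega>. indicator A \<omega> * X \<omega>) / measure_pmf.prob D A"

definition signal_event :: "nat \<Rightarrow> real \<Rightarrow> ((nat \<Rightarrow> nat) \<times> (nat \<Rightarrow> real)) set" where
  "signal_event i \<theta> = {(t, s). s (t i) = \<theta>}"

definition Q :: "nat \<Rightarrow> (nat \<Rightarrow> nat \<Rightarrow> real) \<Rightarrow> ((nat \<Rightarrow> nat) \<Rightarrow> (nat \<Rightarrow> real) pmf)
                  \<Rightarrow> nat \<Rightarrow> real \<Rightarrow> real \<Rightarrow> real" where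
  "Q n W \<phi> i x \<theta> = cond_exp (joint n \<phi>) (signal_event i \<theta>)
      (\<lambda>(t, s). x + (\<Sum>v'\<in>{..<n} - {t i}. W (t i) v' * s v'))"

definition persuasive :: "nat \<Rightarrow> (nat \<Rightarrow> nat \<Rightarrow> real) \<Rightarrow> ((nat \<Rightarrow> nat) \<Rightarrow> (nat \<Rightarrow> real) pmf) \<Rightarrow> bool" where
  "persuasive n W \<phi> \<longleftrightarrow>
     (\<forall>i<n. \<forall>\<theta>. measure_pmf.prob (joint n \<phi>) (signal_event i \<theta>) > 0 \<longrightarrow>
        Q n W \<phi> i \<theta> \<theta> \<ge> 1 \<and> \<theta> = (LEAST x. 0 \<le> x \<and> Q n W \<phi> i x \<theta> \<ge> 1))"

definition cost :: "nat \<Rightarrow> ((nat \<Rightarrow> nat) \<Rightarrow> (nat \<Rightarrow> real) pmf) \<Rightarrow> real" where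
  "cost n \<phi> = measure_pmf.expectation (joint n \<phi>) (\<lambda>(t, s). \<Sum>v<n. \<bar>s v\<bar>)"

end

theory Submission
  imports Defs
begin

text \<open>
  Let \<open>J\<close> be a maximal independent set, hence a dominating set, and \<open>\<theta>\<close> a
  fractional cover of weight at most \<open>2 OPT\<close>. Draw a random vertex set \<open>S\<close> equal to \<open>J\<close>
  with probability \<open>\<rho>\<close> and to an independent rounding of \<open>\<theta>\<close> otherwise, and let the
  vertices of \<open>S\<close> signal \<open>a = X / (X + E)\<close> and all others \<open>0\<close>, where \<open>X\<close> is the
  expected size of \<open>S\<close> and \<open>E\<close> the expected number of ordered adjacent pairs inside
  \<open>S\<close>. This value of \<open>a\<close> makes the agents receiving \<open>a\<close> exactly indifferent, and the
  agents receiving \<open>0\<close> are covered as soon as \<open>n E \<le> X (F - n)\<close>, \<open>F\<close> being the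
  expected number of pairs \<open>(v, v')\<close> with \<open>v'\<close> in \<open>S\<close> and \<open>W v v' = 1\<close>. The
  dominating set makes \<open>F - n\<close> large and the rounding keeps \<open>E\<close> below \<open>(2 OPT)\<^sup>2\<close>, so
  \<open>\<rho> |J| = 2 sqrt n \<Sum>\<theta>\<close> works (and \<open>S = J\<close> does if \<open>|J|\<close> is already that small).

  A persuasive scheme satisfies, for every agent and signal \<open>\<theta>\<close>, that the
  expected excess coverage \<open>(W s)\<^sub>v - 1\<close> of the agent's type on the event of receiving
  \<open>\<theta>\<close> vanishes for \<open>\<theta> \<noteq> 0\<close> and is nonnegative for \<open>\<theta> = 0\<close>. Adding these constraints
  with multipliers \<open>\<mu> \<theta>\<close>, \<open>\<mu> 0 \<ge> 0\<close>, bounds the cost below by the minimum over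
  \<open>s \<in> [0, 1]\<^sup>V\<close> of \<open>\<Sum>\<^sub>v s\<^sub>v - \<mu> s\<^sub>v ((W s)\<^sub>v - 1)\<close>. On the double star with \<open>m\<close>
  leaves at each of two adjacent centres, \<open>OPT \<le> 2\<close>, and a suitable \<open>\<mu>\<close> makes this
  minimum at least \<open>sqrt m / 16\<close>.
\<close>

section \<open>Uniformly random type profiles\<close>

lemma finite_type_profiles: "finite (type_profiles n)"
  unfolding type_profiles_def by (rule finite_permutations) simp

lemma id_in_type_profiles: "id \<in> type_profiles n"
  unfolding type_profiles_def by simp

lemma type_profiles_less: "t \<in> type_profiles n \<Longrightarrow> i < n \<Longrightarrow> t i < n"
  unfolding type_profiles_def using permutes_in_image by fastforce

lemma sum_type_profile_reindex:
  assumes "t \<in> type_profiles n"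
  shows "(\<Sum>i<n. g (t i)) = (\<Sum>v<n. g v)"
proof -
  have "bij_betw t {..<n} {..<n}"
    using assms unfolding type_profiles_def by (auto intro: permutes_imp_bij)
  then show ?thesis
    by (rule sum.reindex_bij_betw)
qed

lemma card_type_profiles_at:
  assumes "v < n" "w < n"
  shows "card {t \<in> type_profiles n. t i = v} = card {t \<in> type_profiles n. t i = w}"
proof -
  let ?swap = "\<lambda>t. Transposition.transpose v w \<circ> t"
  have "bij_betw ?swap {t \<in> type_profiles n. t i = v} {t \<in> type_profiles n. t i = w}"
  proof (rule bij_betw_byWitness[where f' = ?swap])
    show "?swap ` {t \<in> type_profiles n. t i = v} \<subseteq> {t \<in> type_profiles n. t i = w}"
      and "?swap ` {t \<in> type_profiles n. t i = w} \<subseteq> {t \<in> type_profiles n. t i = v}"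
      using assms by (auto simp: type_profiles_def intro!: permutes_compose permutes_swap_id)
  qed (auto simp: fun_eq_iff Transposition.transpose_def)
  then show ?thesis
    by (rule bij_betw_same_card)
qed

lemma sum_type_profiles_at:
  fixes g :: "nat \<Rightarrow> real"
  assumes "i < n"
  shows "(\<Sum>t\<in>type_profiles n. g (t i)) = card (type_profiles n) / n * (\<Sum>v<n. g v)"
proof -
  define c where "c = card {t \<in> type_profiles n. t i = i}"
  have card_at: "card {t \<in> type_profiles n. t i = v} = c" if "v < n" for v
    unfolding c_def using card_type_profiles_at[OF that assms] .
  have by_value: "(\<Sum>t\<in>type_profiles n. h (t i)) = c * (\<Sum>v<n. h v)" for h :: "nat \<Rightarrow> real"
  proof -
    have "(\<Sum>t\<in>type_profiles n. h (t i)) = (\<Sum>v<n. \<Sum>t\<in>{t \<in> type_profiles n. t i = v}. h (t i))"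
      using finite_type_profiles type_profiles_less assms by (intro sum.group[symmetric]) auto
    also have "\<dots> = (\<Sum>v<n. c * h v)"
      using card_at by (intro sum.cong) auto
    finally show ?thesis
      by (simp add: sum_distrib_left)
  qed
  from by_value[of "\<lambda>_. 1"] have "real (card (type_profiles n)) = c * n"
    by simp
  with by_value[of g] assms show ?thesis
    by simp
qed

lemma expectation_joint_const_at:
  fixes H :: "nat \<Rightarrow> (nat \<Rightarrow> real) \<Rightarrow> real"
  assumes "i < n" "finite (set_pmf D)"
  shows "measure_pmf.expectation (joint n (\<lambda>_. D)) (\<lambda>\<omega>. H (fst \<omega> i) (snd \<omega>))
         = measure_pmf.expectation D (\<lambda>s. \<Sum>v<n. H v s) / n"
proof -
  let ?T = "type_profiles n"
  have "card ?T > 0"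
    using finite_type_profiles id_in_type_profiles card_gt_0_iff by blast
  have by_value: "(\<lambda>s. \<Sum>t\<in>?T. H (t i) s) = (\<lambda>s. card ?T / n * (\<Sum>v<n. H v s))"
  proof
    fix s
    show "(\<Sum>t\<in>?T. H (t i) s) = card ?T / n * (\<Sum>v<n. H v s)"
      using sum_type_profiles_at[OF assms(1), of "\<lambda>v. H v s"] .
  qed
  have "measure_pmf.expectation (joint n (\<lambda>_. D)) (\<lambda>\<omega>. H (fst \<omega> i) (snd \<omega>))
      = (\<Sum>t\<in>?T. measure_pmf.expectation (map_pmf (\<lambda>s. (t, s)) D) (\<lambda>\<omega>. H (fst \<omega> i) (snd \<omega>)) /\<^sub>R card ?T)"
    unfolding joint_def using finite_type_profiles id_in_type_profiles assms(2)
    by (intro pmf_expectation_bind_pmf_of_set) auto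
  also have "\<dots> = (\<Sum>t\<in>?T. measure_pmf.expectation D (H (t i))) / card ?T"
    by (simp add: sum_divide_distrib divide_inverse_commute sum_distrib_left)
  also have "\<dots> = measure_pmf.expectation D (\<lambda>s. \<Sum>t\<in>?T. H (t i) s) / card ?T"
    using assms(2) by (subst Bochner_Integration.integral_sum) (auto intro: integrable_measure_pmf_finite)
  also have "\<dots> = card ?T / n * measure_pmf.expectation D (\<lambda>s. \<Sum>v<n. H v s) / card ?T"
    unfolding by_value by (simp only: integral_mult_right_zero)
  also have "\<dots> = measure_pmf.expectation D (\<lambda>s. \<Sum>v<n. H v s) / n"
    using \<open>card ?T > 0\<close> by simp
  finally show ?thesis .
qed

lemma expectation_joint_const_snd:
  fixes G :: "(nat \<Rightarrow> real) \<Rightarrow> real"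
  assumes "finite (set_pmf D)"
  shows "measure_pmf.expectation (joint n (\<lambda>_. D)) (\<lambda>\<omega>. G (snd \<omega>)) = measure_pmf.expectation D G"
proof -
  let ?T = "type_profiles n"
  have "card ?T > 0"
    using finite_type_profiles id_in_type_profiles card_gt_0_iff by blast
  have "measure_pmf.expectation (joint n (\<lambda>_. D)) (\<lambda>\<omega>. G (snd \<omega>))
      = (\<Sum>t\<in>?T. measure_pmf.expectation (map_pmf (\<lambda>s. (t, s)) D) (\<lambda>\<omega>. G (snd \<omega>)) /\<^sub>R card ?T)"
    unfolding joint_def using finite_type_profiles id_in_type_profiles assms
    by (intro pmf_expectation_bind_pmf_of_set) auto
  also have "\<dots> = measure_pmf.expectation D G"
    using \<open>card ?T > 0\<close> by simp
  finally show ?thesis .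
qed

lemma AE_joint_scheme:
  assumes "is_scheme n \<Sigma> \<phi>"
  shows "AE \<omega> in joint n \<phi>. fst \<omega> \<in> type_profiles n \<and> (\<forall>v<n. snd \<omega> v \<in> \<Sigma>)"
proof (rule AE_pmfI)
  fix \<omega> assume "\<omega> \<in> set_pmf (joint n \<phi>)"
  moreover have "type_profiles n \<noteq> {}"
    using id_in_type_profiles by blast
  ultimately have "fst \<omega> \<in> type_profiles n" "snd \<omega> \<in> set_pmf (\<phi> (fst \<omega>))"
    unfolding joint_def using finite_type_profiles by auto
  with assms show "fst \<omega> \<in> type_profiles n \<and> (\<forall>v<n. snd \<omega> v \<in> \<Sigma>)"
    unfolding is_scheme_def by blast
qed

lemma is_scheme_signal_range:
  assumes "is_scheme n \<Sigma> \<phi>" "x \<in> \<Sigma>"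
  shows "0 \<le> x" "x \<le> 1"
  using assms unfolding is_scheme_def by auto

lemma integrable_joint_scheme:
  fixes f :: "(nat \<Rightarrow> nat) \<times> (nat \<Rightarrow> real) \<Rightarrow> real"
  assumes "is_scheme n \<Sigma> \<phi>"
    and "\<And>\<omega>. fst \<omega> \<in> type_profiles n \<Longrightarrow> \<forall>v<n. snd \<omega> v \<in> \<Sigma> \<Longrightarrow> \<bar>f \<omega>\<bar> \<le> B"
  shows "integrable (joint n \<phi>) f"
proof (rule measure_pmf.integrable_const_bound)
  show "AE \<omega> in joint n \<phi>. norm (f \<omega>) \<le> B"
    using AE_joint_scheme[OF assms(1)] by eventually_elim (use assms(2) in simp)
qed simp

section \<open>Persuasiveness\<close>

definition spillover :: "nat \<Rightarrow> (nat \<Rightarrow> nat \<Rightarrow> real) \<Rightarrow> nat \<Rightarrow> (nat \<Rightarrow> nat) \<times> (nat \<Rightarrow> real) \<Rightarrow> real" where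
  "spillover n W i \<omega> = (\<Sum>v'\<in>{..<n} - {fst \<omega> i}. W (fst \<omega> i) v' * snd \<omega> v')"

lemma abs_weighted_sum_le:
  fixes W :: "nat \<Rightarrow> nat \<Rightarrow> real"
  assumes "u < n" "A \<subseteq> {..<n}" "\<forall>v<n. 0 \<le> s v \<and> s v \<le> 1"
  shows "\<bar>\<Sum>v\<in>A. W u v * s v\<bar> \<le> (\<Sum>u<n. \<Sum>v<n. \<bar>W u v\<bar>)"
proof -
  have "\<bar>\<Sum>v\<in>A. W u v * s v\<bar> \<le> (\<Sum>v\<in>A. \<bar>W u v\<bar>)"
    using assms(2,3) by (intro order.trans[OF sum_abs] sum_mono) (auto simp: abs_mult mult_left_le)
  also have "\<dots> \<le> (\<Sum>v<n. \<bar>W u v\<bar>)"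
    using assms(2) by (intro sum_mono2) auto
  also have "\<dots> \<le> (\<Sum>u<n. \<Sum>v<n. \<bar>W u v\<bar>)"
    using assms(1) by (intro member_le_sum sum_nonneg) auto
  finally show ?thesis .
qed

lemma integrable_spillover:
  assumes "is_scheme n \<Sigma> \<phi>" "i < n"
  shows "integrable (joint n \<phi>) (spillover n W i)"
  using assms(1) unfolding spillover_def
  by (rule integrable_joint_scheme)
    (auto intro!: abs_weighted_sum_le type_profiles_less[OF _ assms(2)] is_scheme_signal_range[OF assms(1)])

lemma integrable_indicator_spillover:
  assumes "is_scheme n \<Sigma> \<phi>" "i < n"
  shows "integrable (joint n \<phi>) (\<lambda>\<omega>. indicator A \<omega> * spillover n W i \<omega>)"
  using integrable_mult_indicator[OF _ integrable_spillover[OF assms]] by simp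

lemma expectation_indicator_spillover:
  assumes "is_scheme n \<Sigma> \<phi>" "i < n"
  shows "measure_pmf.expectation (joint n \<phi>) (\<lambda>\<omega>. indicator (signal_event i \<theta>) \<omega> * spillover n W i \<omega>)
         = measure_pmf.prob (joint n \<phi>) (signal_event i \<theta>) * Q n W \<phi> i 0 \<theta>"
proof (cases "measure_pmf.prob (joint n \<phi>) (signal_event i \<theta>) = 0")
  case True
  then have "AE \<omega> in joint n \<phi>. \<omega> \<notin> signal_event i \<theta>"
    by (auto simp: measure_pmf_zero_iff AE_measure_pmf_iff)
  then have "measure_pmf.expectation (joint n \<phi>) (\<lambda>\<omega>. indicator (signal_event i \<theta>) \<omega> * spillover n W i \<omega>)
      = measure_pmf.expectation (joint n \<phi>) (\<lambda>_. 0)"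
    by (intro integral_cong_AE) (auto elim!: eventually_mono)
  with True show ?thesis
    by simp
next
  case False
  have "(\<lambda>(t, s). 0 + (\<Sum>v'\<in>{..<n} - {t i}. W (t i) v' * s v')) = spillover n W i"
    by (auto simp: spillover_def fun_eq_iff)
  with False show ?thesis
    unfolding Q_def cond_exp_def by simp
qed

lemma Q_eq_add:
  assumes "is_scheme n \<Sigma> \<phi>" "i < n" "measure_pmf.prob (joint n \<phi>) (signal_event i \<theta>) > 0"
  shows "Q n W \<phi> i x \<theta> = x + Q n W \<phi> i 0 \<theta>"
proof -
  let ?A = "signal_event i \<theta>"
  let ?P = "measure_pmf.prob (joint n \<phi>) ?A"
  have "measure_pmf.expectation (joint n \<phi>) (\<lambda>\<omega>. x * indicator ?A \<omega> + indicator ?A \<omega> * spillover n W i \<omega>)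
      = x * ?P + ?P * Q n W \<phi> i 0 \<theta>"
    using integrable_indicator_spillover[OF assms(1,2)] expectation_indicator_spillover[OF assms(1,2)]
    by (simp add: measure_pmf.emeasure_finite less_top[symmetric])
  moreover have "(\<lambda>\<omega>. indicator ?A \<omega> * (case \<omega> of (t, s) \<Rightarrow> x + (\<Sum>v'\<in>{..<n} - {t i}. W (t i) v' * s v')))
      = (\<lambda>\<omega>. x * indicator ?A \<omega> + indicator ?A \<omega> * spillover n W i \<omega>)"
    by (auto simp: fun_eq_iff spillover_def algebra_simps)
  ultimately have "Q n W \<phi> i x \<theta> = (x * ?P + ?P * Q n W \<phi> i 0 \<theta>) / ?P"
    unfolding Q_def[of n W \<phi> i x] cond_exp_def by simp
  with assms(3) show ?thesis
    by (simp add: add_divide_distrib)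
qed

lemma Least_nonneg_shift:
  fixes c :: real
  shows "(LEAST x. 0 \<le> x \<and> 1 \<le> x + c) = max 0 (1 - c)"
  by (rule Least_equality) auto

lemma persuasive_iff:
  assumes "is_scheme n \<Sigma> \<phi>"
  shows "persuasive n W \<phi> \<longleftrightarrow>
    (\<forall>i<n. \<forall>\<theta>. 0 < measure_pmf.prob (joint n \<phi>) (signal_event i \<theta>) \<longrightarrow>
       (\<theta> = 0 \<and> 1 \<le> Q n W \<phi> i 0 \<theta>) \<or> (0 < \<theta> \<and> \<theta> + Q n W \<phi> i 0 \<theta> = 1))"
proof -
  have "(1 \<le> Q n W \<phi> i \<theta> \<theta> \<and> \<theta> = (LEAST x. 0 \<le> x \<and> 1 \<le> Q n W \<phi> i x \<theta>)) \<longleftrightarrow>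
       (\<theta> = 0 \<and> 1 \<le> Q n W \<phi> i 0 \<theta>) \<or> (0 < \<theta> \<and> \<theta> + Q n W \<phi> i 0 \<theta> = 1)"
    if "i < n" "0 < measure_pmf.prob (joint n \<phi>) (signal_event i \<theta>)" for i \<theta>
  proof -
    define q where "q = Q n W \<phi> i 0 \<theta>"
    have Q_shift: "Q n W \<phi> i x \<theta> = x + q" for x
      unfolding q_def using Q_eq_add[OF assms that] .
    have "(LEAST x. 0 \<le> x \<and> 1 \<le> Q n W \<phi> i x \<theta>) = max 0 (1 - q)"
      unfolding Q_shift by (rule Least_nonneg_shift)
    then show ?thesis
      unfolding Q_shift q_def[symmetric] by (cases "q \<le> 1") (auto simp: max_def)
  qed
  then show ?thesis
    unfolding persuasive_def by blast
qed

section \<open>Signalling on a random vertex set\<close>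

lemma prob_signal_event_const:
  assumes "i < n" "finite (set_pmf D)"
  shows "measure_pmf.prob (joint n (\<lambda>_. D)) (signal_event i \<theta>)
       = measure_pmf.expectation D (\<lambda>s. \<Sum>v<n. of_bool (s v = \<theta>)) / n"
proof -
  have "measure_pmf.prob (joint n (\<lambda>_. D)) (signal_event i \<theta>)
      = measure_pmf.expectation (joint n (\<lambda>_. D)) (indicator (signal_event i \<theta>))"
    by simp
  also have "indicator (signal_event i \<theta>) = (\<lambda>\<omega>. (\<lambda>v s. of_bool (s v = \<theta>) :: real) (fst \<omega> i) (snd \<omega>))"
    by (auto simp: fun_eq_iff signal_event_def indicator_def)
  also have "measure_pmf.expectation (joint n (\<lambda>_. D)) \<dots>
      = measure_pmf.expectation D (\<lambda>s. \<Sum>v<n. of_bool (s v = \<theta>)) / n"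
    by (rule expectation_joint_const_at[OF assms])
  finally show ?thesis .
qed

lemma Q_const:
  assumes "i < n" "finite (set_pmf D)"
  shows "Q n W (\<lambda>_. D) i 0 \<theta> =
     measure_pmf.expectation D (\<lambda>s. \<Sum>v<n. of_bool (s v = \<theta>) * (\<Sum>v'\<in>{..<n} - {v}. W v v' * s v'))
     / measure_pmf.expectation D (\<lambda>s. \<Sum>v<n. of_bool (s v = \<theta>))"
proof -
  have "measure_pmf.expectation (joint n (\<lambda>_. D))
          (\<lambda>\<omega>. indicator (signal_event i \<theta>) \<omega> * (case \<omega> of (t, s) \<Rightarrow> 0 + (\<Sum>v'\<in>{..<n} - {t i}. W (t i) v' * s v')))
      = measure_pmf.expectation (joint n (\<lambda>_. D))
          (\<lambda>\<omega>. (\<lambda>v s. of_bool (s v = \<theta>) * (\<Sum>v'\<in>{..<n} - {v}. W v v' * s v')) (fst \<omega> i) (snd \<omega>))"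
    by (rule arg_cong[where f = "measure_pmf.expectation _"])
      (auto simp: fun_eq_iff signal_event_def indicator_def)
  also have "\<dots> = measure_pmf.expectation D
      (\<lambda>s. \<Sum>v<n. of_bool (s v = \<theta>) * (\<Sum>v'\<in>{..<n} - {v}. W v v' * s v')) / n"
    by (rule expectation_joint_const_at[OF assms])
  finally show ?thesis
    unfolding Q_def cond_exp_def prob_signal_event_const[OF assms] using assms(1) by simp
qed

definition selection_size :: "nat \<Rightarrow> (nat \<Rightarrow> bool) \<Rightarrow> real" where
  "selection_size n S = (\<Sum>v<n. of_bool (S v))"

definition coverage :: "nat \<Rightarrow> (nat \<Rightarrow> nat \<Rightarrow> real) \<Rightarrow> (nat \<Rightarrow> bool) \<Rightarrow> real" where
  "coverage n W S = (\<Sum>v<n. \<Sum>v'<n. W v v' * of_bool (S v'))"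

definition inner_pairs :: "nat \<Rightarrow> (nat \<Rightarrow> nat \<Rightarrow> real) \<Rightarrow> (nat \<Rightarrow> bool) \<Rightarrow> real" where
  "inner_pairs n W S = (\<Sum>v<n. \<Sum>v'\<in>{..<n} - {v}. W v v' * of_bool (S v) * of_bool (S v'))"

definition boundary_pairs :: "nat \<Rightarrow> (nat \<Rightarrow> nat \<Rightarrow> real) \<Rightarrow> (nat \<Rightarrow> bool) \<Rightarrow> real" where
  "boundary_pairs n W S = (\<Sum>v<n. \<Sum>v'\<in>{..<n} - {v}. W v v' * of_bool (\<not> S v) * of_bool (S v'))"

lemma coverage_eq:
  assumes "\<forall>v<n. W v v = 1"
  shows "coverage n W S = selection_size n S + inner_pairs n W S + boundary_pairs n W S"
proof -
  have "(\<Sum>v'<n. W v v' * of_bool (S v')) = of_bool (S v)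
      + (\<Sum>v'\<in>{..<n} - {v}. W v v' * of_bool (S v) * of_bool (S v'))
      + (\<Sum>v'\<in>{..<n} - {v}. W v v' * of_bool (\<not> S v) * of_bool (S v'))" if "v < n" for v
  proof -
    have "(\<Sum>v'<n. W v v' * of_bool (S v')) = W v v * of_bool (S v) + (\<Sum>v'\<in>{..<n} - {v}. W v v' * of_bool (S v'))"
      using that by (subst sum.remove[of _ v]) auto
    also have "(\<Sum>v'\<in>{..<n} - {v}. W v v' * of_bool (S v'))
        = (\<Sum>v'\<in>{..<n} - {v}. W v v' * of_bool (S v) * of_bool (S v') + W v v' * of_bool (\<not> S v) * of_bool (S v'))"
      by (intro sum.cong) auto
    finally show ?thesis
      using assms that by (simp add: sum.distrib)
  qed
  then show ?thesis
    unfolding coverage_def selection_size_def inner_pairs_def boundary_pairs_def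
    by (simp add: sum.distrib)
qed

definition set_signal :: "real \<Rightarrow> (nat \<Rightarrow> bool) \<Rightarrow> nat \<Rightarrow> real" where
  "set_signal a S v = (if S v then a else 0)"

definition set_scheme :: "real \<Rightarrow> (nat \<Rightarrow> bool) pmf \<Rightarrow> (nat \<Rightarrow> nat) \<Rightarrow> (nat \<Rightarrow> real) pmf" where
  "set_scheme a M = (\<lambda>_. map_pmf (set_signal a) M)"

lemma set_signal_eq_mult: "set_signal a S v = a * of_bool (S v)"
  unfolding set_signal_def by simp

lemma set_signal_eq_iff:
  assumes "a \<noteq> 0"
  shows "set_signal a S v = a \<longleftrightarrow> S v" and "set_signal a S v = 0 \<longleftrightarrow> \<not> S v"
  using assms unfolding set_signal_def by auto

lemma is_scheme_set_scheme:
  assumes "0 < a" "a \<le> 1" "finite (set_pmf M)"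
  shows "is_scheme n {0, a} (set_scheme a M)"
  using assms unfolding is_scheme_def set_scheme_def set_signal_def by auto

lemma cost_set_scheme:
  assumes "0 \<le> a" "finite (set_pmf M)"
  shows "cost n (set_scheme a M) = a * measure_pmf.expectation M (selection_size n)"
proof -
  have "(\<lambda>S. \<Sum>v<n. \<bar>set_signal a S v\<bar>) = (\<lambda>S. a * selection_size n S)"
    using assms(1) unfolding set_signal_eq_mult selection_size_def
    by (simp add: abs_mult sum_distrib_left del: sum_of_bool_eq)
  then show ?thesis
    unfolding cost_def set_scheme_def case_prod_unfold
    using assms(2) expectation_joint_const_snd[where D = "map_pmf (set_signal a) M" and G = "\<lambda>s. \<Sum>v<n. \<bar>s v\<bar>"]
    by simp
qed

lemma count_set_signal:
  assumes "a \<noteq> 0"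
  shows "(\<Sum>v<n. of_bool (set_signal a S v = a)) = selection_size n S"
    and "(\<Sum>v<n. of_bool (set_signal a S v = 0)) = n - selection_size n S"
    and "\<theta> \<notin> {0, a} \<Longrightarrow> (\<Sum>v<n. of_bool (set_signal a S v = \<theta>) :: real) = 0"
proof -
  show "(\<Sum>v<n. of_bool (set_signal a S v = a)) = selection_size n S"
    unfolding selection_size_def set_signal_eq_iff[OF assms] ..
  have "(\<Sum>v<n. of_bool (set_signal a S v = 0)) = (\<Sum>v<n. 1 - of_bool (S v) :: real)"
    unfolding set_signal_eq_iff[OF assms] by (intro sum.cong) auto
  then show "(\<Sum>v<n. of_bool (set_signal a S v = 0)) = n - selection_size n S"
    unfolding selection_size_def by (simp add: sum_subtractf del: sum_of_bool_eq)
  show "\<theta> \<notin> {0, a} \<Longrightarrow> (\<Sum>v<n. of_bool (set_signal a S v = \<theta>) :: real) = 0"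
    unfolding set_signal_def by (intro sum.neutral) auto
qed

lemma weighted_count_set_signal:
  assumes "a \<noteq> 0"
  shows "(\<Sum>v<n. of_bool (set_signal a S v = a) * (\<Sum>v'\<in>{..<n} - {v}. W v v' * set_signal a S v'))
           = a * inner_pairs n W S"
    and "(\<Sum>v<n. of_bool (set_signal a S v = 0) * (\<Sum>v'\<in>{..<n} - {v}. W v v' * set_signal a S v'))
           = a * boundary_pairs n W S"
  unfolding inner_pairs_def boundary_pairs_def set_signal_eq_iff[OF assms]
  unfolding set_signal_eq_mult
  by (simp_all add: sum_distrib_left mult_ac del: sum_mult_of_bool_eq sum_of_bool_mult_eq)

lemma prob_set_scheme:
  assumes "a \<noteq> 0" "i < n" "finite (set_pmf M)"
  defines "X \<equiv> measure_pmf.expectation M (selection_size n)"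
  shows "measure_pmf.prob (joint n (set_scheme a M)) (signal_event i a) = X / n"
    and "measure_pmf.prob (joint n (set_scheme a M)) (signal_event i 0) = (n - X) / n"
    and "\<theta> \<notin> {0, a} \<Longrightarrow> measure_pmf.prob (joint n (set_scheme a M)) (signal_event i \<theta>) = 0"
proof -
  have fin: "finite (set_pmf (map_pmf (set_signal a) M))"
    using assms(3) by simp
  show "measure_pmf.prob (joint n (set_scheme a M)) (signal_event i a) = X / n"
    and "measure_pmf.prob (joint n (set_scheme a M)) (signal_event i 0) = (n - X) / n"
    and "\<theta> \<notin> {0, a} \<Longrightarrow> measure_pmf.prob (joint n (set_scheme a M)) (signal_event i \<theta>) = 0"
    using assms(3) count_set_signal[OF assms(1)]
    unfolding set_scheme_def prob_signal_event_const[OF assms(2) fin] X_def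
    by (simp_all add: integrable_measure_pmf_finite del: sum_of_bool_eq sum_of_bool_mult_eq)
qed

lemma Q_set_scheme:
  assumes "a \<noteq> 0" "i < n" "finite (set_pmf M)"
  defines "X \<equiv> measure_pmf.expectation M (selection_size n)"
  shows "Q n W (set_scheme a M) i 0 a = a * measure_pmf.expectation M (inner_pairs n W) / X"
    and "Q n W (set_scheme a M) i 0 0 = a * measure_pmf.expectation M (boundary_pairs n W) / (n - X)"
proof -
  have fin: "finite (set_pmf (map_pmf (set_signal a) M))"
    using assms(3) by simp
  show "Q n W (set_scheme a M) i 0 a = a * measure_pmf.expectation M (inner_pairs n W) / X"
    and "Q n W (set_scheme a M) i 0 0 = a * measure_pmf.expectation M (boundary_pairs n W) / (n - X)"
    using assms(3) count_set_signal[OF assms(1)] weighted_count_set_signal[OF assms(1)]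
    unfolding set_scheme_def Q_const[OF assms(2) fin] X_def
    by (simp_all add: integrable_measure_pmf_finite del: sum_of_bool_eq sum_of_bool_mult_eq)
qed

lemma persuasive_set_scheme:
  fixes n :: nat and W :: "nat \<Rightarrow> nat \<Rightarrow> real" and M :: "(nat \<Rightarrow> bool) pmf"
  assumes M: "finite (set_pmf M)" and "0 < a" "a \<le> 1"
  defines "X \<equiv> measure_pmf.expectation M (selection_size n)"
    and "E \<equiv> measure_pmf.expectation M (inner_pairs n W)"
    and "C \<equiv> measure_pmf.expectation M (boundary_pairs n W)"
  assumes indifferent: "a * E = (1 - a) * X" and covered: "real n - X \<le> a * C"
  shows "persuasive n W (set_scheme a M)"
proof -
  have "(\<theta> = 0 \<and> 1 \<le> Q n W (set_scheme a M) i 0 \<theta>) \<or> (0 < \<theta> \<and> \<theta> + Q n W (set_scheme a M) i 0 \<theta> = 1)"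
    if i: "i < n" and P: "0 < measure_pmf.prob (joint n (set_scheme a M)) (signal_event i \<theta>)" for i \<theta>
  proof -
    note prob = prob_set_scheme[OF _ i M, of a, folded X_def]
    note Q = Q_set_scheme[OF _ i M, of a W, folded X_def E_def C_def]
    consider "\<theta> = a" | "\<theta> = 0" | "\<theta> \<notin> {0, a}"
      by blast
    then show ?thesis
    proof cases
      case 1
      with P prob(1) \<open>0 < a\<close> have "0 < X"
        by (simp add: zero_less_divide_iff)
      with 1 indifferent Q(1) \<open>0 < a\<close> show ?thesis
        by simp
    next
      case 2
      with P prob(2) \<open>0 < a\<close> have "0 < n - X"
        by (simp add: zero_less_divide_iff)
      with covered have "1 \<le> a * C / (n - X)"
        by (simp add: le_divide_eq)
      with 2 Q(2) \<open>0 < a\<close> show ?thesis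
        by simp
    next
      case 3
      with P prob(3) \<open>0 < a\<close> show ?thesis
        by simp
    qed
  qed
  then show ?thesis
    using persuasive_iff[OF is_scheme_set_scheme[OF \<open>0 < a\<close> \<open>a \<le> 1\<close> M]] by blast
qed

lemma unit_weight_graphD:
  assumes "unit_weight_graph n W" "u < n" "v < n"
  shows "W u v = 0 \<or> W u v = 1" "0 \<le> W u v" "W u v \<le> 1" "W u v = W v u" "W u u = 1"
proof -
  show "W u v = 0 \<or> W u v = 1" "W u v = W v u" "W u u = 1"
    using assms unfolding unit_weight_graph_def by auto
  then show "0 \<le> W u v" "W u v \<le> 1"
    by auto
qed

lemma inner_pairs_nonneg:
  assumes "unit_weight_graph n W"
  shows "0 \<le> inner_pairs n W S"
  unfolding inner_pairs_def
  by (intro sum_nonneg mult_nonneg_nonneg unit_weight_graphD[OF assms]) auto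

lemma binary_scheme_of_random_set:
  fixes n :: nat and W :: "nat \<Rightarrow> nat \<Rightarrow> real" and M :: "(nat \<Rightarrow> bool) pmf"
  assumes W: "unit_weight_graph n W" and M: "finite (set_pmf M)"
  defines "X \<equiv> measure_pmf.expectation M (selection_size n)"
    and "E \<equiv> measure_pmf.expectation M (inner_pairs n W)"
    and "F \<equiv> measure_pmf.expectation M (coverage n W)"
  assumes "0 < X" "real n * E \<le> X * (F - n)"
  shows "\<exists>\<Sigma> \<phi>. is_scheme n \<Sigma> \<phi> \<and> card \<Sigma> = 2 \<and> persuasive n W \<phi> \<and> cost n \<phi> \<le> X"
proof -
  define C where "C = measure_pmf.expectation M (boundary_pairs n W)"
  define a where "a = X / (X + E)"
  have "0 \<le> E"
    unfolding E_def using inner_pairs_nonneg[OF W] by (simp add: Bochner_Integration.integral_nonneg)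
  have "\<forall>v<n. W v v = 1"
    using unit_weight_graphD(5)[OF W] by blast
  then have "coverage n W = (\<lambda>S. selection_size n S + inner_pairs n W S + boundary_pairs n W S)"
    using coverage_eq by blast
  then have "F = X + E + C"
    using M unfolding F_def X_def E_def C_def by (simp add: integrable_measure_pmf_finite)
  with assms(7) have "(n - X) * (X + E) \<le> X * C"
    by (simp add: algebra_simps)
  with \<open>0 < X\<close> \<open>0 \<le> E\<close> have "real n - X \<le> a * C"
    unfolding a_def by (simp add: field_simps)
  moreover have "a * E = (1 - a) * X"
    unfolding a_def using \<open>0 < X\<close> \<open>0 \<le> E\<close> by (simp add: field_simps)
  ultimately have "persuasive n W (set_scheme a M)"
    using persuasive_set_scheme[OF M, of a n W, folded X_def E_def C_def] \<open>0 < X\<close> \<open>0 \<le> E\<close>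
    unfolding a_def by simp
  moreover have "0 < a" "a \<le> 1"
    unfolding a_def using \<open>0 < X\<close> \<open>0 \<le> E\<close> by auto
  moreover have "cost n (set_scheme a M) = a * X"
    unfolding X_def using cost_set_scheme[OF _ M] \<open>0 < a\<close> by simp
  ultimately show ?thesis
    using is_scheme_set_scheme[OF _ _ M] \<open>0 < X\<close>
    by (intro exI[of _ "{0, a}"] exI[of _ "set_scheme a M"]) (auto simp: mult_left_le_one_le)
qed

section \<open>Fractional covers and independent sets\<close>

lemma OPT_le:
  assumes "feasible n W \<theta>"
  shows "OPT n W \<le> (\<Sum>v<n. \<theta> v)"
  unfolding OPT_def
proof (rule cInf_lower)
  show "bdd_below {\<Sum>v<n. \<theta> v |\<theta>. feasible n W \<theta>}"
    by (rule bdd_belowI[of _ 0]) (auto simp: feasible_def intro: sum_nonneg)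
qed (use assms in blast)

lemma feasible_const_1: "unit_weight_graph n W \<Longrightarrow> feasible n W (\<lambda>_. 1)"
  unfolding feasible_def
proof (intro conjI allI impI)
  fix v assume W: "unit_weight_graph n W" and "v < n"
  then have "W v v * 1 \<le> (\<Sum>v'<n. W v v' * 1)"
    by (intro member_le_sum) (auto intro: unit_weight_graphD[OF W])
  then show "1 \<le> (\<Sum>v'<n. W v v' * 1)"
    using unit_weight_graphD(5)[OF W \<open>v < n\<close> \<open>v < n\<close>] by simp
qed simp

lemma one_le_sum_feasible:
  assumes W: "unit_weight_graph n W" and "0 < n" and \<theta>: "feasible n W \<theta>"
  shows "1 \<le> (\<Sum>v<n. \<theta> v)"
proof -
  have "1 \<le> (\<Sum>v'<n. W 0 v' * \<theta> v')"
    using \<theta> \<open>0 < n\<close> unfolding feasible_def by blast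
  also have "\<dots> \<le> (\<Sum>v<n. \<theta> v)"
    using \<theta> \<open>0 < n\<close> unfolding feasible_def
    by (intro sum_mono mult_left_le_one_le) (auto intro: unit_weight_graphD[OF W])
  finally show ?thesis .
qed

lemma one_le_OPT:
  assumes W: "unit_weight_graph n W" and "0 < n"
  shows "1 \<le> OPT n W"
  unfolding OPT_def
  using feasible_const_1[OF W] one_le_sum_feasible[OF assms]
  by (intro cInf_greatest) auto

lemma feasible_min_1:
  assumes W: "unit_weight_graph n W" and \<theta>: "feasible n W \<theta>"
  shows "feasible n W (\<lambda>v. min 1 (\<theta> v))"
  unfolding feasible_def
proof (intro conjI allI impI)
  fix v assume "v < n"
  show "1 \<le> (\<Sum>v'<n. W v v' * min 1 (\<theta> v'))"
  proof (cases "\<exists>v'<n. W v v' = 1 \<and> 1 \<le> \<theta> v'")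
    case True
    then obtain v' where v': "v' < n" "W v v' = 1" "1 \<le> \<theta> v'"
      by blast
    have "W v v' * min 1 (\<theta> v') \<le> (\<Sum>v'<n. W v v' * min 1 (\<theta> v'))"
      using \<theta> \<open>v < n\<close> v'(1) unfolding feasible_def
      by (intro member_le_sum mult_nonneg_nonneg unit_weight_graphD[OF W]) auto
    with v' show ?thesis
      by simp
  next
    case False
    then have "(\<Sum>v'<n. W v v' * min 1 (\<theta> v')) = (\<Sum>v'<n. W v v' * \<theta> v')"
      using unit_weight_graphD(1)[OF W \<open>v < n\<close>] by (intro sum.cong) (auto simp: min_def)
    with \<theta> \<open>v < n\<close> show ?thesis
      unfolding feasible_def by simp
  qed
qed (use \<theta> in \<open>auto simp: feasible_def\<close>)

lemma exists_cover_le_twice_OPT: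
  assumes W: "unit_weight_graph n W" and "0 < n"
  obtains \<theta> where "feasible n W \<theta>" "\<forall>v<n. \<theta> v \<le> 1" "(\<Sum>v<n. \<theta> v) \<le> 2 * OPT n W"
proof -
  have "OPT n W < 2 * OPT n W"
    using one_le_OPT[OF assms] by simp
  then obtain \<theta> where \<theta>: "feasible n W \<theta>" "(\<Sum>v<n. \<theta> v) < 2 * OPT n W"
    using cInf_lessD[of "{\<Sum>v<n. \<theta> v |\<theta>. feasible n W \<theta>}"] feasible_const_1[OF W]
    unfolding OPT_def by blast
  have "(\<Sum>v<n. min 1 (\<theta> v)) \<le> (\<Sum>v<n. \<theta> v)"
    by (intro sum_mono) simp
  with \<theta> feasible_min_1[OF W] that[of "\<lambda>v. min 1 (\<theta> v)"] show ?thesis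
    by simp
qed

definition independent_set :: "nat \<Rightarrow> (nat \<Rightarrow> nat \<Rightarrow> real) \<Rightarrow> nat set \<Rightarrow> bool" where
  "independent_set n W J \<longleftrightarrow> J \<subseteq> {..<n} \<and> (\<forall>u\<in>J. \<forall>v\<in>J. u \<noteq> v \<longrightarrow> W u v = 0)"

lemma exists_independent_dominating_set:
  assumes W: "unit_weight_graph n W"
  obtains J where "independent_set n W J" "\<forall>v<n. \<exists>u\<in>J. W v u = 1"
proof -
  have "finite {J. independent_set n W J}"
    by (rule finite_subset[of _ "Pow {..<n}"]) (auto simp: independent_set_def)
  moreover have "{} \<in> {J. independent_set n W J}"
    by (simp add: independent_set_def)
  ultimately obtain J where J: "independent_set n W J"
    and maximal: "\<And>J'. independent_set n W J' \<Longrightarrow> J \<subseteq> J' \<Longrightarrow> J = J'"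
    using finite_has_maximal[of "{J. independent_set n W J}"] by blast
  have "\<exists>u\<in>J. W v u = 1" if "v < n" for v
  proof (rule ccontr)
    assume undominated: "\<not> (\<exists>u\<in>J. W v u = 1)"
    have "independent_set n W (insert v J)"
      using J \<open>v < n\<close> undominated unit_weight_graphD[OF W]
      unfolding independent_set_def by (metis insertE subsetD insert_subset lessThan_iff)
    with maximal have "v \<in> J"
      by blast
    with undominated unit_weight_graphD(5)[OF W \<open>v < n\<close> \<open>v < n\<close>] show False
      by blast
  qed
  with J that show ?thesis
    by blast
qed

lemma selection_size_set:
  assumes "J \<subseteq> {..<n}"
  shows "selection_size n (\<lambda>v. v \<in> J) = card J"
proof -
  have "{..<n} \<inter> {v. v \<in> J} = J"
    using assms by auto
  then show ?thesis
    unfolding selection_size_def by simp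
qed

lemma inner_pairs_independent_set:
  assumes "independent_set n W J"
  shows "inner_pairs n W (\<lambda>v. v \<in> J) = 0"
  using assms unfolding inner_pairs_def independent_set_def
  by (intro sum.neutral ballI) auto

lemma coverage_dominating_set:
  fixes \<theta> :: "nat \<Rightarrow> real"
  assumes W: "unit_weight_graph n W" and J: "independent_set n W J"
    and dominating: "\<forall>v<n. \<exists>u\<in>J. W v u = 1"
    and \<theta>: "feasible n W \<theta>" "\<forall>v<n. \<theta> v \<le> 1"
  shows "n \<le> coverage n W (\<lambda>v. v \<in> J)"
    and "card J - (\<Sum>v<n. \<theta> v) \<le> coverage n W (\<lambda>v. v \<in> J) - n"
proof -
  define cov where "cov v = (\<Sum>v'<n. W v v' * of_bool (v' \<in> J))" for v
  have "J \<subseteq> {..<n}"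
    using J unfolding independent_set_def by simp
  have cov_ge_1: "1 \<le> cov v" if "v < n" for v
  proof -
    obtain u where "u \<in> J" "W v u = 1"
      using dominating \<open>v < n\<close> by blast
    with \<open>J \<subseteq> {..<n}\<close> have "W v u * of_bool (u \<in> J) \<le> cov v"
      unfolding cov_def by (intro member_le_sum) (auto intro: unit_weight_graphD[OF W \<open>v < n\<close>])
    with \<open>W v u = 1\<close> \<open>u \<in> J\<close> show ?thesis
      by simp
  qed
  have coverage: "coverage n W (\<lambda>v. v \<in> J) = (\<Sum>v<n. cov v)"
    unfolding coverage_def cov_def ..
  show "n \<le> coverage n W (\<lambda>v. v \<in> J)"
    unfolding coverage using sum_mono[of "{..<n}" "\<lambda>_. 1" cov] cov_ge_1 by simp
  have "(\<Sum>v<n. \<theta> v * cov v) = (\<Sum>u<n. of_bool (u \<in> J) * (\<Sum>v<n. W u v * \<theta> v))"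
    unfolding cov_def sum_distrib_left
    by (subst sum.swap) (auto simp: unit_weight_graphD(4)[OF W] mult_ac intro!: sum.cong)
  also have "\<dots> \<ge> (\<Sum>u<n. of_bool (u \<in> J))"
    using \<theta>(1) unfolding feasible_def by (intro sum_mono) auto
  finally have "card J \<le> (\<Sum>v<n. \<theta> v * cov v)"
    using selection_size_set[OF \<open>J \<subseteq> {..<n}\<close>] unfolding selection_size_def by simp
  moreover have "(\<Sum>v<n. \<theta> v * (cov v - 1)) \<le> (\<Sum>v<n. cov v - 1)"
    using \<theta> cov_ge_1 unfolding feasible_def by (intro sum_mono mult_left_le_one_le) auto
  ultimately show "card J - (\<Sum>v<n. \<theta> v) \<le> coverage n W (\<lambda>v. v \<in> J) - n"
    unfolding coverage by (simp add: algebra_simps sum_subtractf sum.distrib)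
qed

section \<open>Independent rounding and mixtures\<close>

definition independent_rounding :: "nat \<Rightarrow> (nat \<Rightarrow> real) \<Rightarrow> (nat \<Rightarrow> bool) pmf" where
  "independent_rounding n \<theta> = Pi_pmf {..<n} False (\<lambda>v. bernoulli_pmf (\<theta> v))"

lemma finite_set_pmf_independent_rounding: "finite (set_pmf (independent_rounding n \<theta>))"
  unfolding independent_rounding_def
  by (rule finite_subset[OF set_Pi_pmf_subset' finite_PiE_dflt]) auto

lemma integrable_independent_rounding: "integrable (independent_rounding n \<theta>) (g :: _ \<Rightarrow> real)"
  by (rule integrable_measure_pmf_finite[OF finite_set_pmf_independent_rounding])

lemma expectation_independent_rounding_at:
  assumes "v < n" "0 \<le> \<theta> v" "\<theta> v \<le> 1"
  shows "measure_pmf.expectation (independent_rounding n \<theta>) (\<lambda>S. c * of_bool (S v)) = c * \<theta> v"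
proof -
  have "measure_pmf.expectation (independent_rounding n \<theta>) (\<lambda>S. of_bool (S v) :: real)
      = measure_pmf.expectation (map_pmf (\<lambda>S. S v) (independent_rounding n \<theta>)) of_bool"
    by simp
  also have "map_pmf (\<lambda>S. S v) (independent_rounding n \<theta>) = bernoulli_pmf (\<theta> v)"
    unfolding independent_rounding_def using assms(1) by (subst Pi_pmf_component) auto
  finally show ?thesis
    using assms(2,3) by simp
qed

lemma expectation_independent_rounding_pair:
  assumes "v < n" "v' < n" "v \<noteq> v'" "\<forall>u<n. 0 \<le> \<theta> u \<and> \<theta> u \<le> 1"
  shows "measure_pmf.expectation (independent_rounding n \<theta>) (\<lambda>S. of_bool (S v) * of_bool (S v')) = \<theta> v * \<theta> v'"
proof -
  define g where "g u b = (if u = v \<or> u = v' then of_bool b else (1::real))" for u b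
  have "(\<Prod>u<n. g u (S u)) = of_bool (S v) * of_bool (S v')" for S
  proof -
    have "(\<Prod>u<n. g u (S u)) = (\<Prod>u\<in>{v, v'}. g u (S u))"
      using assms by (intro prod.mono_neutral_right) (auto simp: g_def)
    with assms show ?thesis
      by (simp add: g_def)
  qed
  moreover have "(\<Prod>u<n. measure_pmf.expectation (bernoulli_pmf (\<theta> u)) (g u)) = \<theta> v * \<theta> v'"
  proof -
    have "(\<Prod>u<n. measure_pmf.expectation (bernoulli_pmf (\<theta> u)) (g u))
        = (\<Prod>u\<in>{v, v'}. measure_pmf.expectation (bernoulli_pmf (\<theta> u)) (g u))"
      using assms by (intro prod.mono_neutral_right) (auto simp: g_def)
    with assms show ?thesis
      by (simp add: g_def)
  qed
  moreover have "measure_pmf.expectation (independent_rounding n \<theta>) (\<lambda>S. \<Prod>u<n. g u (S u))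
      = (\<Prod>u<n. measure_pmf.expectation (bernoulli_pmf (\<theta> u)) (g u))"
    unfolding independent_rounding_def
    by (rule expectation_prod_Pi_pmf) (auto simp: g_def intro!: integrable_measure_pmf_finite)
  ultimately show ?thesis
    by simp
qed

lemma expectation_selection_size_rounding:
  assumes "\<forall>v<n. 0 \<le> \<theta> v \<and> \<theta> v \<le> 1"
  shows "measure_pmf.expectation (independent_rounding n \<theta>) (selection_size n) = (\<Sum>v<n. \<theta> v)"
  unfolding selection_size_def using assms expectation_independent_rounding_at[of _ n \<theta> 1]
  by (subst Bochner_Integration.integral_sum)
    (auto simp: integrable_independent_rounding simp del: sum_of_bool_eq intro!: sum.cong)

lemma expectation_coverage_rounding:
  assumes \<theta>: "feasible n W \<theta>" "\<forall>v<n. \<theta> v \<le> 1"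
  shows "n \<le> measure_pmf.expectation (independent_rounding n \<theta>) (coverage n W)"
proof -
  have "measure_pmf.expectation (independent_rounding n \<theta>) (coverage n W)
      = (\<Sum>v<n. \<Sum>v'<n. measure_pmf.expectation (independent_rounding n \<theta>) (\<lambda>S. W v v' * of_bool (S v')))"
    unfolding coverage_def by (simp only: Bochner_Integration.integral_sum integrable_independent_rounding)
  also have "\<dots> = (\<Sum>v<n. \<Sum>v'<n. W v v' * \<theta> v')"
    using \<theta> unfolding feasible_def by (intro sum.cong refl expectation_independent_rounding_at) auto
  also have "\<dots> \<ge> (\<Sum>v<n. 1)"
    using \<theta>(1) unfolding feasible_def by (intro sum_mono) auto
  finally show ?thesis
    by simp
qed

lemma expectation_inner_pairs_rounding:
  assumes W: "unit_weight_graph n W" and \<theta>: "\<forall>v<n. 0 \<le> \<theta> v \<and> \<theta> v \<le> 1"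
  shows "measure_pmf.expectation (independent_rounding n \<theta>) (inner_pairs n W) \<le> (\<Sum>v<n. \<theta> v)\<^sup>2"
proof -
  have "measure_pmf.expectation (independent_rounding n \<theta>) (inner_pairs n W)
      = (\<Sum>v<n. \<Sum>v'\<in>{..<n} - {v}. measure_pmf.expectation (independent_rounding n \<theta>)
           (\<lambda>S. W v v' * (of_bool (S v) * of_bool (S v'))))"
    unfolding inner_pairs_def mult.assoc
    by (simp only: Bochner_Integration.integral_sum integrable_independent_rounding)
  also have "\<dots> = (\<Sum>v<n. \<Sum>v'\<in>{..<n} - {v}. W v v' * (\<theta> v * \<theta> v'))"
    using expectation_independent_rounding_pair[OF _ _ _ \<theta>]
    by (intro sum.cong refl) (simp only: integral_mult_right_zero, auto)
  also have "\<dots> \<le> (\<Sum>v<n. \<Sum>v'<n. \<theta> v * \<theta> v')"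
  proof (intro sum_mono)
    fix v assume "v \<in> {..<n}"
    then have "(\<Sum>v'\<in>{..<n} - {v}. W v v' * (\<theta> v * \<theta> v')) \<le> (\<Sum>v'\<in>{..<n} - {v}. \<theta> v * \<theta> v')"
      using \<theta> by (intro sum_mono mult_left_le_one_le) (auto intro: unit_weight_graphD[OF W])
    also have "\<dots> \<le> (\<Sum>v'<n. \<theta> v * \<theta> v')"
      using \<theta> \<open>v \<in> {..<n}\<close> by (intro sum_mono2) auto
    finally show "(\<Sum>v'\<in>{..<n} - {v}. W v v' * (\<theta> v * \<theta> v')) \<le> (\<Sum>v'<n. \<theta> v * \<theta> v')" .
  qed
  also have "\<dots> = (\<Sum>v<n. \<theta> v)\<^sup>2"
    by (simp add: power2_eq_square sum_product)
  finally show ?thesis .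
qed

definition mixture_pmf :: "real \<Rightarrow> 'a \<Rightarrow> 'a pmf \<Rightarrow> 'a pmf" where
  "mixture_pmf \<rho> x A = bind_pmf (bernoulli_pmf \<rho>) (\<lambda>b. if b then return_pmf x else A)"

lemma finite_set_pmf_mixture_pmf: "finite (set_pmf A) \<Longrightarrow> finite (set_pmf (mixture_pmf \<rho> x A))"
  unfolding mixture_pmf_def by (auto intro: finite_subset)

lemma expectation_mixture_pmf:
  fixes g :: "'a \<Rightarrow> real"
  assumes "0 \<le> \<rho>" "\<rho> \<le> 1" "finite (set_pmf A)"
  shows "measure_pmf.expectation (mixture_pmf \<rho> x A) g = \<rho> * g x + (1 - \<rho>) * measure_pmf.expectation A g"
  using assms unfolding mixture_pmf_def
  by (subst pmf_expectation_bind[where A = UNIV]) (auto simp: UNIV_bool)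

section \<open>Binary schemes of cost O(sqrt n OPT)\<close>

lemma binary_scheme_of_dominating_set:
  assumes W: "unit_weight_graph n W" and "0 < n" and J: "independent_set n W J"
    and dominating: "\<forall>v<n. \<exists>u\<in>J. W v u = 1"
  shows "\<exists>\<Sigma> \<phi>. is_scheme n \<Sigma> \<phi> \<and> card \<Sigma> = 2 \<and> persuasive n W \<phi> \<and> cost n \<phi> \<le> card J"
proof -
  define M where "M = return_pmf (\<lambda>v. v \<in> J)"
  have "J \<subseteq> {..<n}"
    using J unfolding independent_set_def by simp
  moreover have "J \<noteq> {}"
    using dominating \<open>0 < n\<close> by blast
  ultimately have "0 < card J"
    using finite_subset card_gt_0_iff by blast
  then show ?thesis
    using binary_scheme_of_random_set[OF W, of M]
      selection_size_set[OF \<open>J \<subseteq> {..<n}\<close>] inner_pairs_independent_set[OF J]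
      coverage_dominating_set(1)[OF W J dominating feasible_const_1[OF W]]
    unfolding M_def by simp
qed

lemma mixture_statistics:
  fixes \<theta> :: "nat \<Rightarrow> real" and \<rho> :: real
  assumes W: "unit_weight_graph n W" and J: "independent_set n W J"
    and dominating: "\<forall>v<n. \<exists>u\<in>J. W v u = 1"
    and \<theta>: "feasible n W \<theta>" "\<forall>v<n. \<theta> v \<le> 1" and \<rho>: "0 \<le> \<rho>" "\<rho> \<le> 1"
  defines "M \<equiv> mixture_pmf \<rho> (\<lambda>v. v \<in> J) (independent_rounding n \<theta>)" and "s \<equiv> \<Sum>v<n. \<theta> v"
  shows "measure_pmf.expectation M (selection_size n) = \<rho> * card J + (1 - \<rho>) * s"
    and "\<rho> * card J - s \<le> measure_pmf.expectation M (coverage n W) - n"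
    and "measure_pmf.expectation M (inner_pairs n W) \<le> s\<^sup>2"
proof -
  let ?R = "independent_rounding n \<theta>"
  have expectation_M: "measure_pmf.expectation M g = \<rho> * g (\<lambda>v. v \<in> J) + (1 - \<rho>) * measure_pmf.expectation ?R g" for g
    unfolding M_def using \<rho> finite_set_pmf_independent_rounding by (rule expectation_mixture_pmf)
  have \<theta>01: "\<forall>v<n. 0 \<le> \<theta> v \<and> \<theta> v \<le> 1"
    using \<theta> unfolding feasible_def by auto
  then have "0 \<le> s"
    unfolding s_def by (intro sum_nonneg) auto
  have "J \<subseteq> {..<n}"
    using J unfolding independent_set_def by simp
  show "measure_pmf.expectation M (selection_size n) = \<rho> * card J + (1 - \<rho>) * s"
    unfolding expectation_M expectation_selection_size_rounding[OF \<theta>01] selection_size_set[OF \<open>J \<subseteq> {..<n}\<close>] s_def ..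
  have "\<rho> * (card J - s) \<le> \<rho> * (coverage n W (\<lambda>v. v \<in> J) - n)"
    using coverage_dominating_set(2)[OF W J dominating \<theta>] \<rho> unfolding s_def by (simp add: mult_left_mono)
  moreover have "0 \<le> (1 - \<rho>) * (measure_pmf.expectation ?R (coverage n W) - n)"
    using expectation_coverage_rounding[OF \<theta>] \<rho> by simp
  moreover have "\<rho> * s \<le> s"
    using \<rho> \<open>0 \<le> s\<close> by (simp add: mult_left_le_one_le)
  ultimately show "\<rho> * card J - s \<le> measure_pmf.expectation M (coverage n W) - n"
    unfolding expectation_M by (simp add: algebra_simps)
  have "0 \<le> measure_pmf.expectation ?R (inner_pairs n W)"
    using inner_pairs_nonneg[OF W] by (simp add: Bochner_Integration.integral_nonneg)
  then have "(1 - \<rho>) * measure_pmf.expectation ?R (inner_pairs n W) \<le> measure_pmf.expectation ?R (inner_pairs n W)"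
    using \<rho> by (intro mult_left_le_one_le) auto
  with expectation_inner_pairs_rounding[OF W \<theta>01] show "measure_pmf.expectation M (inner_pairs n W) \<le> s\<^sup>2"
    unfolding expectation_M inner_pairs_independent_set[OF J] s_def by simp
qed

lemma binary_scheme_of_mixture:
  fixes \<theta> :: "nat \<Rightarrow> real" and \<rho> :: real
  assumes W: "unit_weight_graph n W" and "0 < n" and J: "independent_set n W J"
    and dominating: "\<forall>v<n. \<exists>u\<in>J. W v u = 1"
    and \<theta>: "feasible n W \<theta>" "\<forall>v<n. \<theta> v \<le> 1" and \<rho>: "0 < \<rho>" "\<rho> \<le> 1"
  defines "s \<equiv> \<Sum>v<n. \<theta> v" and "t \<equiv> \<rho> * card J"
  assumes "s \<le> t" "n * s\<^sup>2 \<le> t * (t - s)"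
  shows "\<exists>\<Sigma> \<phi>. is_scheme n \<Sigma> \<phi> \<and> card \<Sigma> = 2 \<and> persuasive n W \<phi> \<and> cost n \<phi> \<le> t + s"
proof -
  define M where "M = mixture_pmf \<rho> (\<lambda>v. v \<in> J) (independent_rounding n \<theta>)"
  note stats = mixture_statistics[OF W J dominating \<theta> less_imp_le[OF \<rho>(1)] \<rho>(2), folded M_def s_def t_def]
  have "0 \<le> s"
    unfolding s_def using \<theta> by (intro sum_nonneg) (auto simp: feasible_def)
  have "0 < t"
  proof -
    have "J \<subseteq> {..<n}" "J \<noteq> {}"
      using J dominating \<open>0 < n\<close> unfolding independent_set_def by auto
    then have "0 < card J"
      using finite_subset card_gt_0_iff by blast
    with \<rho> show ?thesis
      unfolding t_def by simp
  qed
  have "0 < measure_pmf.expectation M (selection_size n)"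
    unfolding stats(1) using \<open>0 < t\<close> \<open>0 \<le> s\<close> \<rho> by (intro add_pos_nonneg) auto
  moreover have "n * measure_pmf.expectation M (inner_pairs n W)
      \<le> measure_pmf.expectation M (selection_size n) * (measure_pmf.expectation M (coverage n W) - n)"
  proof -
    have "n * measure_pmf.expectation M (inner_pairs n W) \<le> n * s\<^sup>2"
      using stats(3) by (simp add: mult_left_mono)
    also have "\<dots> \<le> t * (t - s)"
      by fact
    also have "\<dots> \<le> measure_pmf.expectation M (selection_size n) * (measure_pmf.expectation M (coverage n W) - n)"
      using stats(2) \<open>s \<le> t\<close> \<open>0 < t\<close> \<open>0 \<le> s\<close> \<rho> unfolding stats(1) by (intro mult_mono) auto
    finally show ?thesis .
  qed
  moreover have "finite (set_pmf M)"
    unfolding M_def by (intro finite_set_pmf_mixture_pmf finite_set_pmf_independent_rounding)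
  moreover have "t + (1 - \<rho>) * s \<le> t + s"
    using \<rho> \<open>0 \<le> s\<close> by (simp add: mult_left_le_one_le)
  ultimately show ?thesis
    using binary_scheme_of_random_set[OF W, of M] unfolding stats(1) by (meson order.trans)
qed

lemma mixture_balance_inequality:
  fixes x s :: real
  assumes "1 \<le> x"
  shows "x * s\<^sup>2 \<le> (2 * sqrt x * s) * (2 * sqrt x * s - s)"
proof -
  have "sqrt x * 1 \<le> sqrt x * sqrt x"
    using assms by (intro mult_left_mono) auto
  moreover have "sqrt x * sqrt x = x"
    using assms by simp
  moreover have "2 * sqrt x * (2 * sqrt x - 1) = 4 * (sqrt x * sqrt x) - 2 * sqrt x"
    by (simp add: algebra_simps)
  ultimately have "x \<le> 2 * sqrt x * (2 * sqrt x - 1)"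
    using assms by linarith
  then have "x * s\<^sup>2 \<le> (2 * sqrt x * (2 * sqrt x - 1)) * s\<^sup>2"
    by (intro mult_right_mono) auto
  then show ?thesis
    by (simp add: power2_eq_square algebra_simps)
qed

lemma binary_scheme_cost_le_cover:
  fixes \<theta> :: "nat \<Rightarrow> real"
  assumes W: "unit_weight_graph n W" and "0 < n" and \<theta>: "feasible n W \<theta>" "\<forall>v<n. \<theta> v \<le> 1"
  shows "\<exists>\<Sigma> \<phi>. is_scheme n \<Sigma> \<phi> \<and> card \<Sigma> = 2 \<and> persuasive n W \<phi> \<and>
           cost n \<phi> \<le> 3 * sqrt n * (\<Sum>v<n. \<theta> v)"
proof -
  define s where "s = (\<Sum>v<n. \<theta> v)"
  have "1 \<le> s" "1 \<le> sqrt n"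
    unfolding s_def using one_le_sum_feasible[OF W \<open>0 < n\<close> \<theta>(1)] \<open>0 < n\<close> by auto
  moreover have "1 * s \<le> sqrt n * s"
    using \<open>1 \<le> s\<close> \<open>1 \<le> sqrt n\<close> by (intro mult_right_mono) auto
  ultimately have "s \<le> 2 * sqrt n * s" "2 * sqrt n * s + s \<le> 3 * sqrt n * s"
    by linarith+
  obtain J where J: "independent_set n W J" and dominating: "\<forall>v<n. \<exists>u\<in>J. W v u = 1"
    using exists_independent_dominating_set[OF W] by blast
  show ?thesis
  proof (cases "card J \<le> 2 * sqrt n * s")
    case True
    with \<open>s \<le> 2 * sqrt n * s\<close> \<open>2 * sqrt n * s + s \<le> 3 * sqrt n * s\<close> have "card J \<le> 3 * sqrt n * s"
      by linarith
    then show ?thesis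
      using binary_scheme_of_dominating_set[OF W \<open>0 < n\<close> J dominating] unfolding s_def by force
  next
    case False
    define \<rho> where "\<rho> = 2 * sqrt n * s / card J"
    from False \<open>s \<le> 2 * sqrt n * s\<close> \<open>1 \<le> s\<close> have "0 < 2 * sqrt n * s" "0 < real (card J)"
      by linarith+
    with False have "0 < \<rho>" "\<rho> \<le> 1" "\<rho> * card J = 2 * sqrt n * s"
      unfolding \<rho>_def by auto
    with binary_scheme_of_mixture[OF W \<open>0 < n\<close> J dominating \<theta>, of \<rho>]
      mixture_balance_inequality[of n s] \<open>0 < n\<close> \<open>s \<le> 2 * sqrt n * s\<close>
    have "\<exists>\<Sigma> \<phi>. is_scheme n \<Sigma> \<phi> \<and> card \<Sigma> = 2 \<and> persuasive n W \<phi> \<and> cost n \<phi> \<le> 2 * sqrt n * s + s"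
      unfolding s_def by simp
    with \<open>2 * sqrt n * s + s \<le> 3 * sqrt n * s\<close> show ?thesis
      unfolding s_def by force
  qed
qed

lemma binary_scheme_cost_le_OPT:
  assumes W: "unit_weight_graph n W"
  shows "\<exists>\<Sigma> \<phi>. is_scheme n \<Sigma> \<phi> \<and> card \<Sigma> = 2 \<and> persuasive n W \<phi> \<and>
           cost n \<phi> \<le> 6 * sqrt n * OPT n W"
proof (cases "n = 0")
  case True
  define \<phi> where "\<phi> = set_scheme 1 (return_pmf (\<lambda>_. False))"
  have "is_scheme n {0, 1} \<phi>"
    unfolding \<phi>_def by (rule is_scheme_set_scheme) auto
  moreover have "cost n \<phi> = 0"
    unfolding \<phi>_def True by (subst cost_set_scheme) (auto simp: selection_size_def)
  moreover have "persuasive n W \<phi>"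
    unfolding persuasive_def True by simp
  ultimately show ?thesis
    using True by (intro exI[of _ "{0, 1}"] exI[of _ \<phi>]) simp
next
  case False
  then obtain \<theta> where \<theta>: "feasible n W \<theta>" "\<forall>v<n. \<theta> v \<le> 1" and "(\<Sum>v<n. \<theta> v) \<le> 2 * OPT n W"
    using exists_cover_le_twice_OPT[OF W] by blast
  then have "3 * sqrt n * (\<Sum>v<n. \<theta> v) \<le> 6 * sqrt n * OPT n W"
    using mult_left_mono[of "\<Sum>v<n. \<theta> v" "2 * OPT n W" "3 * sqrt n"] by simp
  with binary_scheme_cost_le_cover[OF W _ \<theta>] False show ?thesis
    by (meson order.trans not_gr_zero)
qed

section \<open>A Lagrangian lower bound on the cost\<close>

definition cover_excess :: "nat \<Rightarrow> (nat \<Rightarrow> nat \<Rightarrow> real) \<Rightarrow> nat \<Rightarrow> (nat \<Rightarrow> nat) \<times> (nat \<Rightarrow> real) \<Rightarrow> real" where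
  "cover_excess n W i \<omega> = snd \<omega> (fst \<omega> i) + spillover n W i \<omega> - 1"

lemma indicator_mult_cover_excess:
  "indicator (signal_event i \<theta>) \<omega> * cover_excess n W i \<omega>
     = (\<theta> - 1) * indicator (signal_event i \<theta>) \<omega> + indicator (signal_event i \<theta>) \<omega> * spillover n W i \<omega>"
  by (auto simp: cover_excess_def indicator_def signal_event_def algebra_simps)

lemma integrable_indicator_cover_excess:
  assumes \<phi>: "is_scheme n \<Sigma> \<phi>" and "i < n"
  shows "integrable (joint n \<phi>) (\<lambda>\<omega>. indicator (signal_event i \<theta>) \<omega> * cover_excess n W i \<omega>)"
  using integrable_indicator_spillover[OF \<phi> \<open>i < n\<close>]
  unfolding indicator_mult_cover_excess by (simp add: measure_pmf.emeasure_finite less_top[symmetric])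

lemma expectation_indicator_cover_excess:
  assumes \<phi>: "is_scheme n \<Sigma> \<phi>" and "i < n"
  shows "measure_pmf.expectation (joint n \<phi>) (\<lambda>\<omega>. indicator (signal_event i \<theta>) \<omega> * cover_excess n W i \<omega>)
       = measure_pmf.prob (joint n \<phi>) (signal_event i \<theta>) * (\<theta> + Q n W \<phi> i 0 \<theta> - 1)"
proof -
  have "measure_pmf.expectation (joint n \<phi>) (\<lambda>\<omega>. indicator (signal_event i \<theta>) \<omega> * cover_excess n W i \<omega>)
      = (\<theta> - 1) * measure_pmf.prob (joint n \<phi>) (signal_event i \<theta>)
        + measure_pmf.expectation (joint n \<phi>) (\<lambda>\<omega>. indicator (signal_event i \<theta>) \<omega> * spillover n W i \<omega>)"
    using integrable_indicator_spillover[OF \<phi> \<open>i < n\<close>]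
    unfolding indicator_mult_cover_excess by (simp add: measure_pmf.emeasure_finite less_top[symmetric])
  then show ?thesis
    unfolding expectation_indicator_spillover[OF \<phi> \<open>i < n\<close>] by (simp add: algebra_simps)
qed

lemma persuasive_signal_balance:
  fixes \<theta> :: real
  assumes \<phi>: "is_scheme n \<Sigma> \<phi>" and persuasive: "persuasive n W \<phi>" and "i < n"
  defines "e \<equiv> measure_pmf.expectation (joint n \<phi>) (\<lambda>\<omega>. indicator (signal_event i \<theta>) \<omega> * cover_excess n W i \<omega>)"
  shows "0 \<le> e" and "\<theta> \<noteq> 0 \<Longrightarrow> e = 0"
proof -
  let ?P = "measure_pmf.prob (joint n \<phi>) (signal_event i \<theta>)"
  have e: "e = ?P * (\<theta> + Q n W \<phi> i 0 \<theta> - 1)"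
    unfolding e_def by (rule expectation_indicator_cover_excess[OF \<phi> \<open>i < n\<close>])
  have "0 \<le> e \<and> (\<theta> \<noteq> 0 \<longrightarrow> e = 0)"
  proof (cases "?P = 0")
    case False
    then have "0 < ?P"
      by (simp add: measure_nonneg order.not_eq_order_implies_strict)
    with persuasive_iff[OF \<phi>] persuasive \<open>i < n\<close>
    have "(\<theta> = 0 \<and> 1 \<le> Q n W \<phi> i 0 \<theta>) \<or> (0 < \<theta> \<and> \<theta> + Q n W \<phi> i 0 \<theta> = 1)"
      by blast
    with \<open>0 < ?P\<close> show ?thesis
      unfolding e by auto
  qed (simp add: e)
  then show "0 \<le> e" and "\<theta> \<noteq> 0 \<Longrightarrow> e = 0"
    by auto
qed

definition weighted_slack :: "nat \<Rightarrow> (nat \<Rightarrow> nat \<Rightarrow> real) \<Rightarrow> (real \<Rightarrow> real) \<Rightarrow> (nat \<Rightarrow> real) \<Rightarrow> real" where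
  "weighted_slack n W \<mu> s = (\<Sum>v<n. \<mu> (s v) * ((\<Sum>v'<n. W v v' * s v') - 1))"

lemma row_sum_eq_spillover:
  assumes "\<forall>v<n. W v v = 1" "t \<in> type_profiles n" "i < n"
  shows "(\<Sum>v'<n. W (t i) v' * s v') = s (t i) + spillover n W i (t, s)"
  using assms type_profiles_less[OF assms(2,3)] unfolding spillover_def
  by (subst sum.remove[of _ "t i"]) auto

lemma weighted_slack_eq_signal_sum:
  assumes "\<forall>v<n. W v v = 1" "finite \<Sigma>" "t \<in> type_profiles n" "\<forall>v<n. s v \<in> \<Sigma>"
  shows "weighted_slack n W \<mu> s = (\<Sum>i<n. \<Sum>\<theta>\<in>\<Sigma>. \<mu> \<theta> *
           (indicator (signal_event i \<theta>) (t, s) * cover_excess n W i (t, s)))"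
proof -
  have "weighted_slack n W \<mu> s = (\<Sum>i<n. \<mu> (s (t i)) * ((\<Sum>v'<n. W (t i) v' * s v') - 1))"
    unfolding weighted_slack_def by (rule sum_type_profile_reindex[OF assms(3), symmetric])
  also have "\<dots> = (\<Sum>i<n. \<Sum>\<theta>\<in>\<Sigma>. \<mu> \<theta> *
           (indicator (signal_event i \<theta>) (t, s) * cover_excess n W i (t, s)))"
  proof (intro sum.cong refl)
    fix i assume "i \<in> {..<n}"
    then have "s (t i) \<in> \<Sigma>"
      using assms(3,4) type_profiles_less by blast
    have "(\<Sum>\<theta>\<in>\<Sigma>. \<mu> \<theta> * (indicator (signal_event i \<theta>) (t, s) * cover_excess n W i (t, s)))
        = (\<Sum>\<theta>\<in>\<Sigma>. if s (t i) = \<theta> then \<mu> (s (t i)) * cover_excess n W i (t, s) else 0)"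
      by (intro sum.cong) (auto simp: indicator_def signal_event_def)
    also have "\<dots> = \<mu> (s (t i)) * cover_excess n W i (t, s)"
      using assms(2) \<open>s (t i) \<in> \<Sigma>\<close> by (simp add: sum.delta)
    finally have "(\<Sum>\<theta>\<in>\<Sigma>. \<mu> \<theta> * (indicator (signal_event i \<theta>) (t, s) * cover_excess n W i (t, s)))
        = \<mu> (s (t i)) * cover_excess n W i (t, s)" .
    with \<open>i \<in> {..<n}\<close> show "\<mu> (s (t i)) * ((\<Sum>v'<n. W (t i) v' * s v') - 1)
        = (\<Sum>\<theta>\<in>\<Sigma>. \<mu> \<theta> * (indicator (signal_event i \<theta>) (t, s) * cover_excess n W i (t, s)))"
      using row_sum_eq_spillover[where W = W, OF assms(1,3)] by (simp add: cover_excess_def)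
  qed
  finally show ?thesis .
qed

lemma expectation_weighted_slack_nonneg:
  assumes \<phi>: "is_scheme n \<Sigma> \<phi>" and persuasive: "persuasive n W \<phi>"
    and diagonal: "\<forall>v<n. W v v = 1" and "0 \<le> \<mu> 0"
  shows "0 \<le> measure_pmf.expectation (joint n \<phi>) (\<lambda>\<omega>. weighted_slack n W \<mu> (snd \<omega>))"
proof -
  let ?e = "\<lambda>i \<theta>. measure_pmf.expectation (joint n \<phi>)
    (\<lambda>\<omega>. indicator (signal_event i \<theta>) \<omega> * cover_excess n W i \<omega>)"
  have "finite \<Sigma>"
    using \<phi> unfolding is_scheme_def by simp
  have "AE \<omega> in joint n \<phi>. weighted_slack n W \<mu> (snd \<omega>)
      = (\<Sum>i<n. \<Sum>\<theta>\<in>\<Sigma>. \<mu> \<theta> * (indicator (signal_event i \<theta>) \<omega> * cover_excess n W i \<omega>))"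
    using AE_joint_scheme[OF \<phi>]
    by eventually_elim (use weighted_slack_eq_signal_sum[where W = W and \<Sigma> = \<Sigma>, OF diagonal \<open>finite \<Sigma>\<close>] in auto)
  then have "measure_pmf.expectation (joint n \<phi>) (\<lambda>\<omega>. weighted_slack n W \<mu> (snd \<omega>))
      = measure_pmf.expectation (joint n \<phi>)
          (\<lambda>\<omega>. \<Sum>i<n. \<Sum>\<theta>\<in>\<Sigma>. \<mu> \<theta> * (indicator (signal_event i \<theta>) \<omega> * cover_excess n W i \<omega>))"
    by (intro integral_cong_AE) auto
  also have "\<dots> = (\<Sum>i<n. \<Sum>\<theta>\<in>\<Sigma>. \<mu> \<theta> * ?e i \<theta>)"
    using integrable_indicator_cover_excess[OF \<phi>] by (simp add: Bochner_Integration.integral_sum)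
  also have "\<dots> \<ge> 0"
  proof (intro sum_nonneg)
    fix i \<theta> assume "i \<in> {..<n}"
    with persuasive_signal_balance[OF \<phi> persuasive, of i \<theta>] \<open>0 \<le> \<mu> 0\<close>
    show "0 \<le> \<mu> \<theta> * ?e i \<theta>"
      by (cases "\<theta> = 0") auto
  qed
  finally show ?thesis .
qed

lemma integrable_weighted_slack:
  assumes \<phi>: "is_scheme n \<Sigma> \<phi>"
  shows "integrable (joint n \<phi>) (\<lambda>\<omega>. weighted_slack n W \<mu> (snd \<omega>))"
proof (rule integrable_joint_scheme[OF \<phi>])
  fix \<omega> :: "(nat \<Rightarrow> nat) \<times> (nat \<Rightarrow> real)"
  assume signals: "\<forall>v<n. snd \<omega> v \<in> \<Sigma>"
  let ?B = "\<Sum>u<n. \<Sum>v<n. \<bar>W u v\<bar>"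
  have "finite \<Sigma>"
    using \<phi> unfolding is_scheme_def by simp
  have "\<bar>\<mu> (snd \<omega> v) * ((\<Sum>v'<n. W v v' * snd \<omega> v') - 1)\<bar> \<le> (\<Sum>\<theta>\<in>\<Sigma>. \<bar>\<mu> \<theta>\<bar>) * (?B + 1)"
    if "v < n" for v
  proof -
    have "\<bar>\<mu> (snd \<omega> v)\<bar> \<le> (\<Sum>\<theta>\<in>\<Sigma>. \<bar>\<mu> \<theta>\<bar>)"
      using signals \<open>v < n\<close> \<open>finite \<Sigma>\<close> by (intro member_le_sum) auto
    moreover have "\<bar>\<Sum>v'<n. W v v' * snd \<omega> v'\<bar> \<le> ?B"
      using signals \<open>v < n\<close> is_scheme_signal_range[OF \<phi>] by (intro abs_weighted_sum_le) auto
    ultimately show ?thesis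
      unfolding abs_mult by (intro mult_mono) auto
  qed
  then have "(\<Sum>v<n. \<bar>\<mu> (snd \<omega> v) * ((\<Sum>v'<n. W v v' * snd \<omega> v') - 1)\<bar>)
      \<le> (\<Sum>v<n. (\<Sum>\<theta>\<in>\<Sigma>. \<bar>\<mu> \<theta>\<bar>) * (?B + 1))"
    by (intro sum_mono) auto
  then show "\<bar>weighted_slack n W \<mu> (snd \<omega>)\<bar> \<le> n * ((\<Sum>\<theta>\<in>\<Sigma>. \<bar>\<mu> \<theta>\<bar>) * (?B + 1))"
    unfolding weighted_slack_def by (simp add: order_trans[OF sum_abs])
qed

lemma cost_ge_of_multiplier:
  assumes \<phi>: "is_scheme n \<Sigma> \<phi>" and persuasive: "persuasive n W \<phi>"
    and diagonal: "\<forall>v<n. W v v = 1" and "0 \<le> \<mu> 0"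
    and bound: "\<And>s. \<forall>v<n. 0 \<le> s v \<and> s v \<le> 1 \<Longrightarrow> K \<le> (\<Sum>v<n. s v) - weighted_slack n W \<mu> s"
  shows "K \<le> cost n \<phi>"
proof -
  let ?slack = "\<lambda>\<omega>. weighted_slack n W \<mu> (snd \<omega>)"
  have integrable_size: "integrable (joint n \<phi>) (\<lambda>\<omega>. \<Sum>v<n. \<bar>snd \<omega> v\<bar>)"
  proof (rule integrable_joint_scheme[OF \<phi>])
    fix \<omega> :: "(nat \<Rightarrow> nat) \<times> (nat \<Rightarrow> real)"
    assume "\<forall>v<n. snd \<omega> v \<in> \<Sigma>"
    then have "(\<Sum>v<n. \<bar>snd \<omega> v\<bar>) \<le> (\<Sum>v<n. 1)"
      using is_scheme_signal_range[OF \<phi>] by (intro sum_mono) auto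
    then show "\<bar>\<Sum>v<n. \<bar>snd \<omega> v\<bar>\<bar> \<le> n"
      by simp
  qed
  have "K + measure_pmf.expectation (joint n \<phi>) ?slack
      = measure_pmf.expectation (joint n \<phi>) (\<lambda>\<omega>. K + ?slack \<omega>)"
    using integrable_weighted_slack[OF \<phi>] by simp
  also have "\<dots> \<le> measure_pmf.expectation (joint n \<phi>) (\<lambda>\<omega>. \<Sum>v<n. \<bar>snd \<omega> v\<bar>)"
  proof (rule integral_mono_AE)
    show "AE \<omega> in joint n \<phi>. K + ?slack \<omega> \<le> (\<Sum>v<n. \<bar>snd \<omega> v\<bar>)"
      using AE_joint_scheme[OF \<phi>]
    proof eventually_elim
      case (elim \<omega>)
      then have "\<forall>v<n. 0 \<le> snd \<omega> v \<and> snd \<omega> v \<le> 1"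
        using is_scheme_signal_range[OF \<phi>] by blast
      with bound show ?case
        by (simp add: algebra_simps)
    qed
  qed (use integrable_weighted_slack[OF \<phi>] integrable_size in simp_all)
  also have "\<dots> = cost n \<phi>"
    unfolding cost_def by (simp add: case_prod_unfold)
  finally show ?thesis
    using expectation_weighted_slack_nonneg[where W = W and \<mu> = \<mu>, OF \<phi> persuasive diagonal \<open>0 \<le> \<mu> 0\<close>] by simp
qed

section \<open>The double star\<close>

text \<open>Vertices \<open>0\<close> and \<open>1\<close> are the adjacent centres; every other vertex \<open>l\<close> is a leaf
  attached to the centre \<open>l mod 2\<close>.\<close>

definition double_star :: "nat \<Rightarrow> nat \<Rightarrow> real" where
  "double_star u v = of_bool (u = v \<or> (u < 2 \<and> v < 2) \<or> (2 \<le> u \<and> v = u mod 2) \<or> (2 \<le> v \<and> u = v mod 2))"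

definition leaves :: "nat \<Rightarrow> nat \<Rightarrow> nat set" where
  "leaves n c = {l. 2 \<le> l \<and> l < n \<and> l mod 2 = c}"

lemma double_star_sym: "double_star u v = double_star v u"
  unfolding double_star_def by (rule arg_cong[where f = of_bool]) argo

lemma unit_weight_graph_double_star: "unit_weight_graph n double_star"
  unfolding unit_weight_graph_def
proof (intro conjI allI impI)
  fix u v :: nat
  have "of_bool b \<in> {0, 1 :: real}" for b
    by (cases b) simp_all
  then show "double_star u v \<in> {0, 1}"
    unfolding double_star_def .
  show "double_star u v = double_star v u"
    by (rule double_star_sym)
  show "double_star v v = 1"
    unfolding double_star_def by simp
qed

lemma double_star_leaf:
  assumes "2 \<le> l"
  shows "double_star l v = of_bool (v = l \<or> v = l mod 2)"
proof -
  have "\<not> l < 2" "l \<noteq> v mod 2"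
    using assms mod_less_divisor[of 2 v] by linarith+
  with assms show ?thesis
    unfolding double_star_def by (intro arg_cong[where f = of_bool]) argo
qed

lemma double_star_centre:
  assumes "c < 2"
  shows "double_star c v = of_bool (v < 2 \<or> v mod 2 = c)"
proof -
  have "\<not> 2 \<le> c" "c = v \<Longrightarrow> v < 2" "\<not> v < 2 \<Longrightarrow> 2 \<le> v"
    using assms by linarith+
  with assms show ?thesis
    unfolding double_star_def by (intro arg_cong[where f = of_bool]) (metis mod_less)
qed

lemma OPT_double_star_le:
  assumes "2 \<le> n"
  shows "OPT n double_star \<le> 2"
proof -
  define \<theta> where "\<theta> v = (of_bool (v < 2) :: real)" for v :: nat
  have "feasible n double_star \<theta>"
    unfolding feasible_def
  proof (intro conjI allI impI)
    fix v assume "v < n"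
    define c where "c = (if v < 2 then v else v mod 2)"
    have "c < n" "c < 2"
      using \<open>v < n\<close> assms unfolding c_def by auto
    have "double_star v c = 1"
      using double_star_leaf[of v c] unit_weight_graphD(5)[OF unit_weight_graph_double_star \<open>v < n\<close> \<open>v < n\<close>]
      unfolding c_def by (cases "v < 2") auto
    then have "double_star v c * \<theta> c \<le> (\<Sum>v'<n. double_star v v' * \<theta> v')"
      using \<open>c < n\<close> unit_weight_graphD(2)[OF unit_weight_graph_double_star \<open>v < n\<close>]
      by (intro member_le_sum) (auto simp: \<theta>_def)
    with \<open>double_star v c = 1\<close> \<open>c < 2\<close> show "1 \<le> (\<Sum>v'<n. double_star v v' * \<theta> v')"
      by (simp add: \<theta>_def)
  qed (simp add: \<theta>_def)
  then have "OPT n double_star \<le> (\<Sum>v<n. \<theta> v)"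
    by (rule OPT_le)
  also have "(\<Sum>v<n. \<theta> v) = (\<Sum>v\<in>{0, 1}. \<theta> v)"
    using assms by (intro sum.mono_neutral_right) (auto simp: \<theta>_def)
  finally show ?thesis
    by (simp add: \<theta>_def)
qed

lemma card_leaves:
  assumes "n = 2 * m + 2" "c < 2"
  shows "card (leaves n c) = m"
proof -
  have "leaves n c = (\<lambda>k. 2 * k + c) ` {1..m}"
  proof (intro equalityI subsetI)
    fix l assume "l \<in> leaves n c"
    then have "l = 2 * (l div 2) + c" "l div 2 \<in> {1..m}"
      using assms unfolding leaves_def by auto
    then show "l \<in> (\<lambda>k. 2 * k + c) ` {1..m}"
      by blast
  qed (use assms in \<open>auto simp: leaves_def\<close>)
  moreover have "inj_on (\<lambda>k. 2 * k + c) {1..m}"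
    by (auto simp: inj_on_def)
  ultimately show ?thesis
    by (simp add: card_image)
qed

lemma sum_double_star_vertices:
  fixes f :: "nat \<Rightarrow> real"
  assumes "2 \<le> n"
  shows "(\<Sum>v<n. f v) = f 0 + f 1 + (\<Sum>l\<in>leaves n 0. f l) + (\<Sum>l\<in>leaves n 1. f l)"
proof -
  have finite: "finite (leaves n c)" for c
    by (rule finite_subset[of _ "{..<n}"]) (auto simp: leaves_def)
  have "{..<n} = ({0, 1} \<union> leaves n 0) \<union> leaves n 1"
    using assms unfolding leaves_def by auto
  then have "(\<Sum>v<n. f v) = (\<Sum>v\<in>({0, 1} \<union> leaves n 0) \<union> leaves n 1. f v)"
    by (simp only:)
  also have "\<dots> = (\<Sum>v\<in>{0, 1} \<union> leaves n 0. f v) + (\<Sum>l\<in>leaves n 1. f l)"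
    using finite by (intro sum.union_disjoint) (auto simp: leaves_def)
  also have "(\<Sum>v\<in>{0, 1} \<union> leaves n 0. f v) = f 0 + f 1 + (\<Sum>l\<in>leaves n 0. f l)"
    using finite by (subst sum.union_disjoint) (auto simp: leaves_def)
  finally show ?thesis .
qed

lemma double_star_row_leaf:
  assumes "2 \<le> l" "l < n"
  shows "(\<Sum>v'<n. double_star l v' * s v') = s l + s (l mod 2)"
proof -
  have "l mod 2 < l"
    using assms(1) mod_less_divisor[of 2 l] by linarith
  then have "(\<Sum>v'<n. double_star l v' * s v') = (\<Sum>v'\<in>{l, l mod 2}. s v')"
    unfolding double_star_leaf[OF assms(1)] using assms(2)
    by (intro sum.mono_neutral_cong_right) auto
  with \<open>l mod 2 < l\<close> show ?thesis
    by simp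
qed

lemma double_star_row_centre:
  assumes "2 \<le> n" "c < 2"
  shows "(\<Sum>v'<n. double_star c v' * s v') = s c + s (1 - c) + (\<Sum>l\<in>leaves n c. s l)"
proof -
  have "(\<Sum>l\<in>leaves n c'. double_star c l * s l) = (if c' = c then \<Sum>l\<in>leaves n c. s l else 0)" for c'
    unfolding double_star_centre[OF assms(2)] by (auto simp: leaves_def intro!: sum.neutral sum.cong)
  moreover have "c = 0 \<or> c = 1"
    using assms(2) by linarith
  ultimately show ?thesis
    using sum_double_star_vertices[OF assms(1), of "\<lambda>v'. double_star c v' * s v'"] assms(2)
    unfolding double_star_centre[OF assms(2)] by auto
qed

text \<open>On \<open>[1/2, 1)\<close> the multiplier is chosen so that a centre signalling \<open>1 - d\<close>, while the
  other centre signals at least \<open>1/2\<close>, contributes at least \<open>1 / (8 d)\<close> and its \<open>m\<close> leaves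
  at least \<open>m d / 8\<close>; together that is at least \<open>sqrt m / 4\<close>.\<close>

definition star_multiplier :: "real \<Rightarrow> real \<Rightarrow> real" where
  "star_multiplier M \<theta> = (if \<theta> < 1/2 then 1/8 else if \<theta> < 1 then - (\<theta> / (2 * (1 - \<theta>))) else - M)"

lemma leaf_term_ge:
  fixes \<theta> x M :: real
  assumes "0 \<le> \<theta>" "\<theta> \<le> 1" "0 \<le> x" "x \<le> 1" "0 \<le> M"
  shows "(1 - x) / 8 + \<theta> / 4 \<le> \<theta> - star_multiplier M \<theta> * (\<theta> + x - 1)"
proof -
  consider "\<theta> < 1/2" | "1/2 \<le> \<theta>" "\<theta> < 1" | "\<theta> = 1"
    using assms by linarith
  then show ?thesis
  proof cases
    case 1
    with assms show ?thesis
      by (simp add: star_multiplier_def field_simps)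
  next
    case 2
    then have "0 < 1 - \<theta>"
      by simp
    have "\<theta> - star_multiplier M \<theta> * (\<theta> + x - 1) = \<theta> / 2 + \<theta> * x / (2 * (1 - \<theta>))"
      using 2 \<open>0 < 1 - \<theta>\<close> by (simp add: star_multiplier_def field_simps)
    moreover have "0 \<le> \<theta> * x / (2 * (1 - \<theta>))"
      using \<open>0 < 1 - \<theta>\<close> assms by simp
    moreover have "(1 - x) / 8 + \<theta> / 4 \<le> \<theta> / 2"
      using 2 assms by (simp add: field_simps)
    ultimately show ?thesis
      by linarith
  next
    case 3
    with assms show ?thesis
      by (simp add: star_multiplier_def field_simps)
  qed
qed

lemma centre_term_ge:
  fixes x y \<sigma> M :: real
  assumes "0 \<le> x" "x \<le> 1" "0 \<le> y" "y \<le> 1" "0 \<le> \<sigma>" "0 \<le> M"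
  defines "T \<equiv> x - star_multiplier M x * (x + y + \<sigma> - 1)"
  shows "x < 1/2 \<Longrightarrow> - \<sigma> / 8 \<le> T"
    and "1/2 \<le> x \<Longrightarrow> 0 \<le> T"
    and "1/2 \<le> x \<Longrightarrow> x < 1 \<Longrightarrow> 1/2 \<le> y \<Longrightarrow> 1 / (8 * (1 - x)) \<le> T"
    and "x = 1 \<Longrightarrow> 1/2 \<le> y \<Longrightarrow> M / 2 \<le> T"
proof -
  show "x < 1/2 \<Longrightarrow> - \<sigma> / 8 \<le> T"
    using assms unfolding T_def star_multiplier_def by (simp add: field_simps)
  have middle: "T = x / 2 + x * (y + \<sigma>) / (2 * (1 - x))" if "1/2 \<le> x" "x < 1"
    using that unfolding T_def star_multiplier_def by (simp add: field_simps)
  have top: "T = 1 + M * (y + \<sigma>)" if "x = 1"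
    using that unfolding T_def by (simp add: star_multiplier_def algebra_simps)
  show "1/2 \<le> x \<Longrightarrow> 0 \<le> T"
    using middle top assms(1-6) by (cases "x < 1") auto
  show "1 / (8 * (1 - x)) \<le> T" if "1/2 \<le> x" "x < 1" "1/2 \<le> y"
  proof -
    have "1/2 * (1/2) \<le> x * (y + \<sigma>)"
      using that assms(1-6) by (intro mult_mono) auto
    then have "(1/4) / (2 * (1 - x)) \<le> x * (y + \<sigma>) / (2 * (1 - x))"
      using that by (intro divide_right_mono) auto
    then show ?thesis
      unfolding middle[OF that(1,2)] using assms(1-6) by simp
  qed
  show "x = 1 \<Longrightarrow> 1/2 \<le> y \<Longrightarrow> M / 2 \<le> T"
    using top assms(1-6) mult_left_mono[of "1/2" "y + \<sigma>" M] by simp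
qed

lemma sqrt_le_amgm:
  fixes m d :: real
  assumes "0 < d" "0 \<le> m"
  shows "sqrt m / 4 \<le> m * d / 8 + 1 / (8 * d)"
proof -
  have "0 \<le> (sqrt m * d - 1)\<^sup>2"
    by simp
  then have "2 * sqrt m * d \<le> m * d * d + 1"
    using assms by (simp add: power2_eq_square algebra_simps)
  then have "2 * sqrt m * d / (8 * d) \<le> (m * d * d + 1) / (8 * d)"
    using assms by (intro divide_right_mono) auto
  with assms show ?thesis
    by (simp add: add_divide_distrib)
qed

lemma centre_group_ge:
  fixes x y \<sigma> m G :: real
  assumes x: "0 \<le> x" "x \<le> 1" and y: "0 \<le> y" "y \<le> 1" and "0 \<le> \<sigma>" "1 \<le> m"
    and G: "x - star_multiplier (sqrt m / 2) x * (x + y + \<sigma> - 1) + m * (1 - x) / 8 + \<sigma> / 4 \<le> G"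
  shows "0 \<le> G" and "x < 1/2 \<Longrightarrow> m / 16 \<le> G" and "1/2 \<le> x \<Longrightarrow> 1/2 \<le> y \<Longrightarrow> sqrt m / 4 \<le> G"
proof -
  have "0 \<le> sqrt m / 2"
    using \<open>1 \<le> m\<close> by simp
  note T = centre_term_ge[OF x y \<open>0 \<le> \<sigma>\<close> this]
  have "0 \<le> m * (1 - x) / 8"
    using x \<open>1 \<le> m\<close> by simp
  show low: "m / 16 \<le> G" if "x < 1/2"
  proof -
    have "m * (1/2) \<le> m * (1 - x)"
      using that \<open>1 \<le> m\<close> by (intro mult_left_mono) auto
    with T(1)[OF that] G \<open>0 \<le> \<sigma>\<close> show ?thesis
      by simp
  qed
  show "0 \<le> G"
  proof (cases "x < 1/2")
    case True
    with low \<open>1 \<le> m\<close> show ?thesis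
      by simp
  next
    case False
    with T(2) G \<open>0 \<le> m * (1 - x) / 8\<close> \<open>0 \<le> \<sigma>\<close> show ?thesis
      by simp
  qed
  show "sqrt m / 4 \<le> G" if "1/2 \<le> x" "1/2 \<le> y"
  proof (cases "x < 1")
    case True
    then have "sqrt m / 4 \<le> m * (1 - x) / 8 + 1 / (8 * (1 - x))"
      using sqrt_le_amgm[of "1 - x" m] \<open>1 \<le> m\<close> by simp
    with T(3)[OF that(1) True that(2)] G \<open>0 \<le> \<sigma>\<close> show ?thesis
      by simp
  next
    case False
    with x have "x = 1"
      by simp
    with T(4)[OF _ that(2)] G \<open>0 \<le> \<sigma>\<close> show ?thesis
      by simp
  qed
qed

definition star_term :: "nat \<Rightarrow> nat \<Rightarrow> (nat \<Rightarrow> real) \<Rightarrow> nat \<Rightarrow> real" where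
  "star_term n m s v = s v - star_multiplier (sqrt m / 2) (s v) * ((\<Sum>v'<n. double_star v v' * s v') - 1)"

lemma double_star_group_bounds:
  fixes s :: "nat \<Rightarrow> real" and m :: nat
  assumes n: "n = 2 * m + 2" and "1 \<le> m" and s: "\<forall>v<n. 0 \<le> s v \<and> s v \<le> 1" and "c < 2"
  defines "G \<equiv> star_term n m s c + (\<Sum>l\<in>leaves n c. star_term n m s l)"
  shows "0 \<le> G" and "s c < 1/2 \<Longrightarrow> m / 16 \<le> G" and "1/2 \<le> s c \<Longrightarrow> 1/2 \<le> s (1 - c) \<Longrightarrow> sqrt m / 4 \<le> G"
proof -
  let ?\<sigma> = "\<Sum>l\<in>leaves n c. s l"
  have "2 \<le> n" "c < n" "1 - c < n"
    using n \<open>c < 2\<close> by auto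
  have "(\<Sum>l\<in>leaves n c. (1 - s c) / 8 + s l / 4) \<le> (\<Sum>l\<in>leaves n c. star_term n m s l)"
  proof (intro sum_mono)
    fix l assume "l \<in> leaves n c"
    then have "2 \<le> l" "l < n" "l mod 2 = c"
      unfolding leaves_def by auto
    then have "star_term n m s l = s l - star_multiplier (sqrt m / 2) (s l) * (s l + s c - 1)"
      unfolding star_term_def double_star_row_leaf[OF \<open>2 \<le> l\<close> \<open>l < n\<close>] by simp
    with s \<open>l < n\<close> \<open>c < n\<close> show "(1 - s c) / 8 + s l / 4 \<le> star_term n m s l"
      using leaf_term_ge[of "s l" "s c" "sqrt m / 2"] by simp
  qed
  moreover have "(\<Sum>l\<in>leaves n c. (1 - s c) / 8 + s l / 4) = m * (1 - s c) / 8 + ?\<sigma> / 4"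
    using card_leaves[OF n \<open>c < 2\<close>] by (simp add: sum.distrib sum_divide_distrib)
  moreover have "star_term n m s c = s c - star_multiplier (sqrt m / 2) (s c) * (s c + s (1 - c) + ?\<sigma> - 1)"
    unfolding star_term_def double_star_row_centre[OF \<open>2 \<le> n\<close> \<open>c < 2\<close>] ..
  ultimately have "s c - star_multiplier (sqrt m / 2) (s c) * (s c + s (1 - c) + ?\<sigma> - 1) + m * (1 - s c) / 8 + ?\<sigma> / 4 \<le> G"
    unfolding G_def by simp
  moreover have "0 \<le> ?\<sigma>"
    using s by (intro sum_nonneg) (auto simp: leaves_def)
  ultimately show "0 \<le> G" and "s c < 1/2 \<Longrightarrow> m / 16 \<le> G" and "1/2 \<le> s c \<Longrightarrow> 1/2 \<le> s (1 - c) \<Longrightarrow> sqrt m / 4 \<le> G"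
    using centre_group_ge[of "s c" "s (1 - c)" ?\<sigma> m G] s \<open>c < n\<close> \<open>1 - c < n\<close> \<open>1 \<le> m\<close> by auto
qed

lemma double_star_slack_bound:
  fixes s :: "nat \<Rightarrow> real" and m :: nat
  assumes n: "n = 2 * m + 2" and "1 \<le> m" and s: "\<forall>v<n. 0 \<le> s v \<and> s v \<le> 1"
  shows "sqrt m / 16 \<le> (\<Sum>v<n. s v) - weighted_slack n double_star (star_multiplier (sqrt m / 2)) s"
proof -
  define G where "G c = star_term n m s c + (\<Sum>l\<in>leaves n c. star_term n m s l)" for c
  note G = double_star_group_bounds[OF n \<open>1 \<le> m\<close> s, folded G_def]
  have "2 \<le> n"
    using n by simp
  then have "(\<Sum>v<n. s v) - weighted_slack n double_star (star_multiplier (sqrt m / 2)) s = G 0 + G 1"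
    using sum_double_star_vertices[of n "star_term n m s"]
    unfolding weighted_slack_def G_def star_term_def sum_subtractf[symmetric] by simp
  moreover have "sqrt m \<le> m"
    using \<open>1 \<le> m\<close> by (intro real_le_lsqrt) (auto simp: power2_eq_square)
  moreover have "0 \<le> G 0" "0 \<le> G 1"
    using G(1)[of 0] G(1)[of 1] by auto
  moreover have "sqrt m / 16 \<le> G 0 + G 1"
  proof -
    consider "s 0 < 1/2" | "s 1 < 1/2" | "1/2 \<le> s 0" "1/2 \<le> s 1"
      by linarith
    then show ?thesis
    proof cases
      case 1
      with G(2)[of 0] \<open>sqrt m \<le> m\<close> \<open>0 \<le> G 1\<close> show ?thesis
        by simp
    next
      case 2
      with G(2)[of 1] \<open>sqrt m \<le> m\<close> \<open>0 \<le> G 0\<close> show ?thesis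
        by simp
    next
      case 3
      with G(3)[of 0] \<open>0 \<le> G 0\<close> \<open>0 \<le> G 1\<close> show ?thesis
        by simp
    qed
  qed
  ultimately show ?thesis
    by simp
qed

lemma cost_double_star_ge:
  assumes n: "n = 2 * m + 2" and "1 \<le> m"
    and \<phi>: "is_scheme n \<Sigma> \<phi>" and persuasive: "persuasive n double_star \<phi>"
  shows "sqrt n / 32 \<le> cost n \<phi>"
proof -
  have "sqrt m / 16 \<le> cost n \<phi>"
    using cost_ge_of_multiplier[OF \<phi> persuasive _ _ double_star_slack_bound[OF n \<open>1 \<le> m\<close>]]
      unit_weight_graphD(5)[OF unit_weight_graph_double_star]
    by (simp add: star_multiplier_def)
  moreover have "sqrt n \<le> 2 * sqrt m"
  proof -
    have "sqrt n \<le> sqrt (4 * m)"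
      using n \<open>1 \<le> m\<close> by simp
    also have "\<dots> = 2 * sqrt m"
      by (simp add: real_sqrt_mult)
    finally show ?thesis .
  qed
  ultimately show ?thesis
    by linarith
qed

theorem theorem1p1:
  shows "(\<exists>C>0. \<forall>n W. unit_weight_graph n W \<longrightarrow>
            (\<exists>\<Sigma> \<phi>. is_scheme n \<Sigma> \<phi> \<and> card \<Sigma> = 2 \<and> persuasive n W \<phi> \<and>
                     cost n \<phi> \<le> C * sqrt (real n) * OPT n W))
       \<and> (\<exists>c>0. \<exists>K. \<forall>N. \<exists>n\<ge>N. \<exists>W. unit_weight_graph n W \<and> OPT n W \<le> K \<and>
            (\<forall>\<Sigma> \<phi>. is_scheme n \<Sigma> \<phi> \<and> persuasive n W \<phi> \<longrightarrow> cost n \<phi> \<ge> c * sqrt (real n)))"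
proof
  show "\<exists>C>0. \<forall>n W. unit_weight_graph n W \<longrightarrow>
          (\<exists>\<Sigma> \<phi>. is_scheme n \<Sigma> \<phi> \<and> card \<Sigma> = 2 \<and> persuasive n W \<phi> \<and>
                   cost n \<phi> \<le> C * sqrt (real n) * OPT n W)"
    using binary_scheme_cost_le_OPT by (intro exI[of _ 6]) auto
  have "\<exists>n\<ge>N. unit_weight_graph n double_star \<and> OPT n double_star \<le> 2 \<and>
          (\<forall>\<Sigma> \<phi>. is_scheme n \<Sigma> \<phi> \<and> persuasive n double_star \<phi> \<longrightarrow> 1/32 * sqrt n \<le> cost n \<phi>)" for N
    using unit_weight_graph_double_star OPT_double_star_le cost_double_star_ge[of "2 * (N + 1) + 2" "N + 1"]
    by (intro exI[of _ "2 * (N + 1) + 2"]) auto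
  then show "\<exists>c>0. \<exists>K. \<forall>N. \<exists>n\<ge>N. \<exists>W. unit_weight_graph n W \<and> OPT n W \<le> K \<and>
          (\<forall>\<Sigma> \<phi>. is_scheme n \<Sigma> \<phi> \<and> persuasive n W \<phi> \<longrightarrow> cost n \<phi> \<ge> c * sqrt (real n))"
    by (intro exI[of _ "1/32"] conjI exI[of _ 2]) (simp, blast)
qed

end
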